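(* Let $k\ge 2$ be fixed and, for each $n$, let $T_1,\dots,T_k$ be independent uniformly random spanning trees of the complete graph $K_n$. For each edge $e$ of $K_n$ let $X_e^{T_i}$ be the indicator of $e\in E(T_i)$, $R_e=\sum_{i=1}^k X_e^{T_i}-\max(X_e^{T_1},\dots,X_e^{T_k})$, and $M=\sum_{e\in E(K_n)}R_e$. Then for every $s>0$, \[\lim_{n\to\infty}\Pr\big(|M-\mathbb{E}[M]|\ge s\,\mathbb{E}[M]\big)\le\frac{1}{s^2k(k-1)}.\]
   Context: Uniform random spanning tree: chosen from the uniform distribution on the $n^{n-2}$ labeled spanning trees of $K_n$ on vertex set $[n]$. $M$ is the number of repeated edges in the multigraph union of the trees. *)

theory Defs
  imports "HOL-Probability.Probability"
begin

definition Kn_edges :: "nat \<Rightarrow> nat set set" where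
  "Kn_edges n = {e. \<exists>a b. a < n \<and> b < n \<and> a \<noteq> b \<and> e = {a, b}}"

definition adj :: "nat set set \<Rightarrow> (nat \<times> nat) set" where
  "adj T = {(a, b). {a, b} \<in> T \<and> a \<noteq> b}"

definition connected_on :: "nat \<Rightarrow> nat set set \<Rightarrow> bool" where
  "connected_on n T \<longleftrightarrow> (\<forall>a<n. \<forall>b<n. (a, b) \<in> (adj T)\<^sup>*)"

definition acyclic_graph :: "nat set set \<Rightarrow> bool" where
  "acyclic_graph T \<longleftrightarrow> \<not> (\<exists>vs. length vs \<ge> 3 \<and> distinct vs \<and>
      (\<forall>i<length vs. {vs ! i, vs ! ((i + 1) mod length vs)} \<in> T))"

definition spanning_tree :: "nat \<Rightarrow> nat set set \<Rightarrow> bool" where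
  "spanning_tree n T \<longleftrightarrow> T \<subseteq> Kn_edges n \<and> connected_on n T \<and> acyclic_graph T"

definition spanning_trees :: "nat \<Rightarrow> nat set set set" where
  "spanning_trees n = {T. spanning_tree n T}"

text \<open>k independent uniform spanning trees = uniform distribution on k-tuples
  (functions on {0..<k}) of spanning trees.\<close>
definition tree_tuples :: "nat \<Rightarrow> nat \<Rightarrow> (nat \<Rightarrow> nat set set) pmf" where
  "tree_tuples k n = pmf_of_set (PiE {..<k} (\<lambda>_. spanning_trees n))"

definition R_edge :: "nat \<Rightarrow> (nat \<Rightarrow> nat set set) \<Rightarrow> nat set \<Rightarrow> real" where
  "R_edge k Ts e = (\<Sum>i<k. of_bool (e \<in> Ts i)) - Max ((\<lambda>i. of_bool (e \<in> Ts i)) ` {..<k})"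

definition M_rep :: "nat \<Rightarrow> nat \<Rightarrow> (nat \<Rightarrow> nat set set) \<Rightarrow> real" where
  "M_rep k n Ts = (\<Sum>e\<in>Kn_edges n. R_edge k Ts e)"

end

(*
  Let m_e be the number of the k trees containing the edge e and N_r = sum_e (m_e choose r).
  Since R_e = m_e - [m_e > 0], the Bonferroni inequalities give N_2 - N_3 <= M <= N_2, and N_r is a
  sum over r-subsets J of indices of the number Z_J of edges common to the trees in J.  A uniform
  spanning tree contains a fixed edge with probability 2/n, so E N_2 -> 2 (k choose 2) and
  E N_3 -> 0.  In E (N_2^2) two different pairs J, J' are uncorrelated (resample a tree of J' - J),
  and E (Z_J^2) = sum_{e,f} P(e, f in T)^2 -> 6: by symmetry P(e, f in T) only depends on whether
  e and f are equal, adjacent or disjoint; the adjacent case is O(1/n^2) because a switching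
  argument bounds E (deg_b (deg_b - 1)) by 6, and the disjoint case is controlled by the row sums
  sum_f P(e, f in T) = (n - 1) 2/n.  Chebyshev's inequality then bounds the probability by
  E (N_2^2) / (s E M)^2 - 1/s^2, which tends to 1 / (s^2 k (k - 1)).
*)
theory Submission
  imports Defs "HOL-Library.Transitive_Closure_Table" "HOL-Combinatorics.Permutations"
    "HOL-Real_Asymp.Real_Asymp"
begin

section \<open>Reachability and connected components\<close>

abbreviation reachable :: "nat set set \<Rightarrow> nat \<Rightarrow> nat \<Rightarrow> bool" where
  "reachable F x y \<equiv> (x, y) \<in> (adj F)\<^sup>*"

lemma sym_adj: "sym (adj F)"
  by (auto simp: sym_def adj_def insert_commute)

lemma reachable_sym: "reachable F x y \<Longrightarrow> reachable F y x"
  using sym_rtrancl[OF sym_adj] by (auto simp: sym_def)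

lemma adj_mono: "F \<subseteq> G \<Longrightarrow> adj F \<subseteq> adj G"
  by (auto simp: adj_def)

lemma reachable_mono: "F \<subseteq> G \<Longrightarrow> reachable F x y \<Longrightarrow> reachable G x y"
  using rtrancl_mono[OF adj_mono] by blast

lemma reachable_edge: "{u, v} \<in> F \<Longrightarrow> reachable F u v"
  by (cases "u = v") (auto simp: adj_def)

lemma reachable_insert_edge_iff:
  "reachable (insert {u, v} F) x y \<longleftrightarrow>
     reachable F x y \<or> (reachable F x u \<and> reachable F v y) \<or> (reachable F x v \<and> reachable F u y)"
proof
  assume "reachable (insert {u, v} F) x y"
  then show "reachable F x y \<or> (reachable F x u \<and> reachable F v y) \<or> (reachable F x v \<and> reachable F u y)"
  proof (induction rule: rtrancl_induct)
    case (step y z)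
    then have "(y, z) \<in> adj F \<or> {y, z} = {u, v}"
      by (auto simp: adj_def)
    with step.IH show ?case
      by (auto simp: doubleton_eq_iff intro: rtrancl_into_rtrancl)
  qed simp
next
  have "reachable (insert {u, v} F) u v" "reachable (insert {u, v} F) v u"
    by (auto intro: reachable_edge simp: insert_commute)
  moreover have "reachable F a b \<Longrightarrow> reachable (insert {u, v} F) a b" for a b
    by (rule reachable_mono) auto
  ultimately show "reachable F x y \<or> (reachable F x u \<and> reachable F v y) \<or> (reachable F x v \<and> reachable F u y)
      \<Longrightarrow> reachable (insert {u, v} F) x y"
    by (meson rtrancl_trans)
qed

lemma reachable_insert_reachable_edge:
  assumes "reachable F u v"
  shows "reachable (insert {u, v} F) x y \<longleftrightarrow> reachable F x y"
  using assms reachable_sym[OF assms] by (meson reachable_insert_edge_iff rtrancl_trans)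

definition component :: "nat \<Rightarrow> nat set set \<Rightarrow> nat \<Rightarrow> nat set" where
  "component n F x = {y. y < n \<and> reachable F x y}"

definition num_components :: "nat \<Rightarrow> nat set set \<Rightarrow> nat" where
  "num_components n F = card (component n F ` {..<n})"

lemma component_eq: "y \<in> component n F x \<Longrightarrow> component n F y = component n F x"
  unfolding component_def by (auto intro: rtrancl_trans reachable_sym)

lemma in_own_component: "x < n \<Longrightarrow> x \<in> component n F x"
  by (simp add: component_def)

lemma num_components_empty: "num_components n {} = n"
proof -
  have "component n {} x = {x}" if "x < n" for x
    using that by (auto simp: component_def adj_def)
  then have "inj_on (component n {}) {..<n}"
    by (auto simp: inj_on_def)
  then show ?thesis
    by (simp add: num_components_def card_image)
qed

lemma num_components_insert_reachable:
  "reachable F u v \<Longrightarrow> num_components n (insert {u, v} F) = num_components n F"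
  unfolding num_components_def component_def by (simp add: reachable_insert_reachable_edge)

lemma component_insert_edge:
  assumes "x < n"
  shows "component n (insert {u, v} F) x =
    (if x \<in> component n F u \<union> component n F v then component n F u \<union> component n F v
     else component n F x)"
proof (cases "x \<in> component n F u \<union> component n F v")
  case True
  then have "reachable F x u \<or> reachable F x v"
    by (auto simp: component_def intro: reachable_sym)
  with True show ?thesis
    unfolding component_def reachable_insert_edge_iff
    by (auto intro: rtrancl_trans reachable_sym)
next
  case False
  then have "\<not> reachable F x u" "\<not> reachable F x v"
    using assms by (auto simp: component_def intro: reachable_sym)
  with False show ?thesis
    unfolding component_def reachable_insert_edge_iff by auto
qed

lemma components_insert_edge:
  assumes u: "u < n" and v: "v < n"
  shows "component n (insert {u, v} F) ` {..<n} = insert (component n F u \<union> component n F v)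
           (component n F ` {..<n} - {component n F u, component n F v})"
    (is "_ = insert (?A \<union> ?B) (?X - {?A, ?B})")
proof -
  have in_AB: "x \<in> ?A \<union> ?B \<longleftrightarrow> component n F x \<in> {?A, ?B}" if "x < n" for x
    using that in_own_component[OF that] component_eq by auto
  show ?thesis
  proof (intro equalityI subsetI)
    fix C assume "C \<in> component n (insert {u, v} F) ` {..<n}"
    then obtain x where x: "x < n" "C = component n (insert {u, v} F) x"
      by blast
    then show "C \<in> insert (?A \<union> ?B) (?X - {?A, ?B})"
      using component_insert_edge[OF x(1)] in_AB[OF x(1)] by (cases "x \<in> ?A \<union> ?B") auto
  next
    fix C assume C: "C \<in> insert (?A \<union> ?B) (?X - {?A, ?B})"
    show "C \<in> component n (insert {u, v} F) ` {..<n}"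
    proof (cases "C = ?A \<union> ?B")
      case True
      then show ?thesis
        using component_insert_edge[OF u] in_own_component[OF u] u
        by (auto intro!: image_eqI[where x = u])
    next
      case False
      with C obtain x where "x < n" "C = component n F x" "C \<notin> {?A, ?B}"
        by auto
      then show ?thesis
        using component_insert_edge[of x n] in_AB[of x] by (auto intro!: image_eqI[where x = x])
    qed
  qed
qed

lemma num_components_insert_unreachable:
  assumes u: "u < n" and v: "v < n" and unreach: "\<not> reachable F u v"
  shows "num_components n (insert {u, v} F) + 1 = num_components n F"
proof -
  define A where "A = component n F u"
  define B where "B = component n F v"
  define X where "X = component n F ` {..<n}"
  have AB: "A \<in> X" "B \<in> X"
    using u v by (auto simp: X_def A_def B_def)
  have "A \<noteq> B"
    using unreach in_own_component[OF v] by (auto simp: A_def B_def component_def)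
  moreover have "A \<union> B \<notin> X"
  proof
    assume "A \<union> B \<in> X"
    then obtain x where "x < n" "A \<union> B = component n F x"
      by (auto simp: X_def)
    then have "A = A \<union> B" "B = A \<union> B"
      using component_eq in_own_component u v by (metis A_def B_def UnCI)+
    with \<open>A \<noteq> B\<close> show False by simp
  qed
  moreover have "finite X"
    by (simp add: X_def)
  moreover have "card {A, B} \<le> card X"
    using AB by (intro card_mono) (auto simp: X_def)
  ultimately show ?thesis
    using AB components_insert_edge[OF u v, of F]
    by (simp add: num_components_def X_def[symmetric] A_def[symmetric] B_def[symmetric] card_Diff_subset)
qed

section \<open>Spanning trees of the complete graph\<close>

lemma finite_Kn_edges: "finite (Kn_edges n)"
  by (rule finite_subset[of _ "Pow {..<n}"]) (auto simp: Kn_edges_def)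

lemma Kn_edgesE:
  assumes "e \<in> Kn_edges n"
  obtains a b where "a < n" "b < n" "a \<noteq> b" "e = {a, b}"
  using assms by (auto simp: Kn_edges_def)

lemma Kn_edgesI: "a < n \<Longrightarrow> b < n \<Longrightarrow> a \<noteq> b \<Longrightarrow> {a, b} \<in> Kn_edges n"
  by (auto simp: Kn_edges_def)

lemma card_Kn_edges: "card (Kn_edges n) = n choose 2"
proof -
  have "Kn_edges n = {e. e \<subseteq> {..<n} \<and> card e = 2}"
    by (auto simp: Kn_edges_def card_2_iff)
  then show ?thesis
    using n_subsets[of "{..<n}" 2] by simp
qed

lemma real_choose_two: "real (n choose 2) = real n * (real n - 1) / 2"
proof (induction n)
  case (Suc n)
  have "Suc n choose 2 = n + (n choose 2)"
    by (simp add: numeral_2_eq_2)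
  then show ?case
    using Suc by (simp add: field_simps)
qed simp

lemma n_le_num_components_add_card:
  assumes "finite F" "F \<subseteq> Kn_edges n"
  shows "n \<le> num_components n F + card F"
  using assms
proof (induction F rule: finite_induct)
  case (insert e F)
  then obtain a b where ab: "a < n" "b < n" "e = {a, b}"
    by (auto elim: Kn_edgesE)
  then have "num_components n F \<le> num_components n (insert e F) + 1"
    using num_components_insert_reachable num_components_insert_unreachable
    by (cases "reachable F a b") fastforce+
  with insert show ?case by simp
qed (simp add: num_components_empty)

lemma acyclic_graph_mono: "F \<subseteq> G \<Longrightarrow> acyclic_graph G \<Longrightarrow> acyclic_graph F"
  unfolding acyclic_graph_def by blast

lemma reachable_obtain_distinct_path:
  assumes "reachable F x y"
  obtains xs where "rtrancl_path (\<lambda>a b. (a, b) \<in> adj F) x xs y" "distinct (x # xs)"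
proof -
  have "(\<lambda>a b. (a, b) \<in> adj F)\<^sup>*\<^sup>* x y"
    using assms by (simp add: rtranclp_rtrancl_eq)
  then obtain xs0 where "rtrancl_path (\<lambda>a b. (a, b) \<in> adj F) x xs0 y"
    by (auto simp: rtranclp_eq_rtrancl_path)
  then show ?thesis
    using rtrancl_path_distinct that by metis
qed

lemma reachable_minus_edge_not_acyclic:
  assumes e: "{u, v} \<in> G" and uv: "u \<noteq> v" and r: "reachable (G - {{u, v}}) u v"
  shows "\<not> acyclic_graph G"
proof -
  obtain xs where p: "rtrancl_path (\<lambda>a b. (a, b) \<in> adj (G - {{u, v}})) u xs v"
    and d: "distinct (u # xs)"
    using reachable_obtain_distinct_path[OF r] by blast
  have ne: "xs \<noteq> []"
    using p uv by (auto elim: rtrancl_path.cases)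
  have lastv: "last xs = v"
    using rtrancl_path_last[OF p ne] .
  have edges: "{(u # xs) ! i, xs ! i} \<in> G - {{u, v}}" if "i < length xs" for i
    using rtrancl_path_nth[OF p that] by (auto simp: adj_def)
  have "length xs \<ge> 2"
  proof (rule ccontr)
    assume "\<not> length xs \<ge> 2"
    with ne have "length xs = 1"
      by (cases xs) (auto simp: Suc_le_eq)
    with lastv have "xs = [v]"
      by (cases xs) auto
    then show False
      using edges[of 0] by simp
  qed
  moreover have "{(u # xs) ! i, (u # xs) ! ((i + 1) mod length (u # xs))} \<in> G"
    if "i < length (u # xs)" for i
  proof (cases "i < length xs")
    case True
    then show ?thesis
      using edges[OF True] by simp
  next
    case False
    with that have "i = length xs"
      by simp
    then show ?thesis
      using e lastv ne by (simp add: last_conv_nth insert_commute)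
  qed
  ultimately show ?thesis
    using d unfolding acyclic_graph_def not_not by (intro exI[of _ "u # xs"]) simp
qed

lemma rtrancl_consecutive_nth:
  assumes "\<And>i. Suc i < length xs \<Longrightarrow> (xs ! i, xs ! Suc i) \<in> R" and "xs \<noteq> []"
  shows "(hd xs, last xs) \<in> R\<^sup>*"
  using assms
proof (induction xs)
  case (Cons x xs)
  show ?case
  proof (cases "xs = []")
    case False
    then have "(x, hd xs) \<in> R" "(hd xs, last xs) \<in> R\<^sup>*"
      using Cons.prems(1)[of 0] Cons.IH Cons.prems(1)[of "Suc i" for i]
      by (auto simp: hd_conv_nth)
    then show ?thesis
      using False by simp
  qed simp
qed simp

lemma not_acyclic_graphE:
  assumes "\<not> acyclic_graph G"
  obtains u v where "{u, v} \<in> G" "u \<noteq> v" "reachable (G - {{u, v}}) u v"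
proof -
  from assms obtain vs where vs: "length vs \<ge> 3" "distinct vs"
    "\<forall>i<length vs. {vs ! i, vs ! ((i + 1) mod length vs)} \<in> G"
    unfolding acyclic_graph_def by blast
  define L where "L = length vs"
  define u where "u = vs ! 0"
  define v where "v = vs ! (L - 1)"
  have L: "L \<ge> 3" "Suc (L - 1) = L"
    using vs(1) by (simp_all add: L_def)
  have inj: "inj_on (nth vs) {..<L}"
    using vs(2) by (simp add: inj_on_nth L_def)
  have "{v, u} \<in> G"
    using vs(3)[rule_format, of "L - 1"] L by (simp add: u_def v_def L_def)
  moreover have "u \<noteq> v"
    using inj_onD[OF inj, of 0 "L - 1"] L by (auto simp: u_def v_def)
  moreover have "(vs ! i, vs ! Suc i) \<in> adj (G - {{v, u}})" if i: "Suc i < L" for i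
  proof -
    have "{vs ! i, vs ! Suc i} \<in> G"
      using vs(3)[rule_format, of i] i by (simp add: L_def)
    moreover have "vs ! i \<noteq> vs ! Suc i"
      using inj_onD[OF inj, of i "Suc i"] i by auto
    moreover have "nth vs ` {i, Suc i} \<noteq> nth vs ` {L - 1, 0}"
      by (subst inj_on_image_eq_iff[OF inj]) (use i L in \<open>auto simp: doubleton_eq_iff\<close>)
    then have "{vs ! i, vs ! Suc i} \<noteq> {v, u}"
      by (simp add: u_def v_def)
    ultimately show ?thesis
      by (simp add: adj_def)
  qed
  then have "reachable (G - {{v, u}}) (hd vs) (last vs)"
    using L(1) by (intro rtrancl_consecutive_nth) (auto simp: L_def)
  moreover have "hd vs = u" "last vs = v"
    using L(1) by (simp_all add: hd_conv_nth last_conv_nth u_def v_def L_def flip: length_greater_0_conv)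
  ultimately show ?thesis
    using that[of v u] reachable_sym by auto
qed

lemma num_components_add_card_acyclic:
  assumes "finite F" "F \<subseteq> Kn_edges n" "acyclic_graph F"
  shows "num_components n F + card F = n"
  using assms
proof (induction F rule: finite_induct)
  case (insert e F)
  then obtain a b where ab: "a < n" "b < n" "a \<noteq> b" "e = {a, b}"
    by (auto elim: Kn_edgesE)
  have "insert e F - {{a, b}} = F"
    using insert(2) ab(4) by auto
  then have "\<not> reachable F a b"
    using reachable_minus_edge_not_acyclic[of a b "insert e F"] insert(5) ab by auto
  then have "num_components n (insert e F) + 1 = num_components n F"
    using num_components_insert_unreachable[OF ab(1,2)] ab(4) by simp
  moreover have "num_components n F + card F = n"
    using insert acyclic_graph_mono[of F "insert e F"] by auto
  ultimately show ?case
    using insert(1,2) by simp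
qed (simp add: num_components_empty)

lemma num_components_connected:
  assumes "connected_on n F" "n \<ge> 1"
  shows "num_components n F = 1"
proof -
  have "component n F x = {..<n}" if "x < n" for x
    using assms that by (auto simp: component_def connected_on_def)
  then have "component n F ` {..<n} = {{..<n}}"
    using assms(2) by force
  then show ?thesis
    by (simp add: num_components_def)
qed

lemma connected_card_imp_acyclic:
  assumes sub: "F \<subseteq> Kn_edges n" and con: "connected_on n F" and c: "card F = n - 1"
  shows "acyclic_graph F"
proof (rule ccontr)
  assume "\<not> acyclic_graph F"
  then obtain u v where e: "{u, v} \<in> F" "reachable (F - {{u, v}}) u v"
    by (rule not_acyclic_graphE)
  define G where "G = F - {{u, v}}"
  have fin: "finite F"
    using sub finite_Kn_edges finite_subset by blast
  have "F = insert {u, v} G"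
    using e(1) by (auto simp: G_def)
  moreover have "reachable G u v"
    using e(2) by (simp add: G_def)
  ultimately have "connected_on n G"
    using con reachable_insert_reachable_edge by (simp add: connected_on_def)
  moreover have "n \<ge> 2"
    using c fin e(1) by (cases "card F") auto
  ultimately have "num_components n G = 1"
    using num_components_connected by simp
  moreover have "n \<le> num_components n G + card G"
    using n_le_num_components_add_card[of G n] fin sub by (auto simp: G_def)
  moreover have "card G = n - 2"
    using c e(1) fin by (simp add: G_def)
  ultimately show False
    using \<open>n \<ge> 2\<close> by simp
qed

lemma spanning_tree_iff_card:
  assumes "n \<ge> 1"
  shows "spanning_tree n T \<longleftrightarrow> T \<subseteq> Kn_edges n \<and> connected_on n T \<and> card T = n - 1"
proof
  assume st: "spanning_tree n T"
  then have "T \<subseteq> Kn_edges n" "connected_on n T" "acyclic_graph T"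
    by (auto simp: spanning_tree_def)
  moreover have "finite T"
    using \<open>T \<subseteq> Kn_edges n\<close> finite_Kn_edges finite_subset by blast
  ultimately show "T \<subseteq> Kn_edges n \<and> connected_on n T \<and> card T = n - 1"
    using num_components_add_card_acyclic num_components_connected[OF _ assms] by fastforce
next
  assume "T \<subseteq> Kn_edges n \<and> connected_on n T \<and> card T = n - 1"
  then show "spanning_tree n T"
    using connected_card_imp_acyclic by (auto simp: spanning_tree_def)
qed

lemma spanning_tree_subset: "spanning_tree n T \<Longrightarrow> T \<subseteq> Kn_edges n"
  by (simp add: spanning_tree_def)

lemma finite_spanning_tree: "spanning_tree n T \<Longrightarrow> finite T"
  using spanning_tree_subset finite_Kn_edges finite_subset by blast

lemma card_spanning_tree: "spanning_tree n T \<Longrightarrow> n \<ge> 1 \<Longrightarrow> card T = n - 1"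
  using spanning_tree_iff_card by blast

lemma finite_spanning_trees: "finite (spanning_trees n)"
proof -
  have "spanning_trees n \<subseteq> Pow (Kn_edges n)"
    by (auto simp: spanning_trees_def dest: spanning_tree_subset)
  then show ?thesis
    using finite_Kn_edges by (meson finite_Pow_iff finite_subset)
qed

lemma spanning_tree_edge_not_reachable:
  assumes "spanning_tree n T" "{u, v} \<in> T" "u \<noteq> v"
  shows "\<not> reachable (T - {{u, v}}) u v"
  using reachable_minus_edge_not_acyclic[of u v T] assms by (auto simp: spanning_tree_def)

lemma star_spanning_tree:
  assumes "n \<ge> 1"
  shows "spanning_tree n ((\<lambda>c. {0, c}) ` {1..<n})"
proof -
  define T where "T = (\<lambda>c. {0::nat, c}) ` {1..<n}"
  have "T \<subseteq> Kn_edges n"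
    using assms by (auto simp: T_def intro!: Kn_edgesI)
  moreover have "inj_on (\<lambda>c. {0::nat, c}) {1..<n}"
    by (auto simp: inj_on_def doubleton_eq_iff)
  then have "card T = n - 1"
    by (simp add: T_def card_image)
  moreover have to_root: "reachable T 0 c" if "c < n" for c
    using that reachable_edge[of 0 c T] by (cases "c = 0") (auto simp: T_def)
  have "connected_on n T"
    unfolding connected_on_def
  proof (intro allI impI)
    fix a b assume "a < n" "b < n"
    then show "reachable T a b"
      using reachable_sym[OF to_root[of a]] to_root[of b] by (rule_tac rtrancl_trans) auto
  qed
  ultimately show ?thesis
    using spanning_tree_iff_card[OF assms] by (simp add: T_def)
qed

lemma card_spanning_trees_pos: "n \<ge> 1 \<Longrightarrow> card (spanning_trees n) > 0"
  using star_spanning_tree finite_spanning_trees by (auto simp: spanning_trees_def card_gt_0_iff)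

section \<open>Relabelling vertices\<close>

definition rename_edges :: "(nat \<Rightarrow> nat) \<Rightarrow> nat set set \<Rightarrow> nat set set" where
  "rename_edges \<sigma> T = (\<lambda>e. \<sigma> ` e) ` T"

lemma rename_edges_mem_iff: "inj \<sigma> \<Longrightarrow> \<sigma> ` e \<in> rename_edges \<sigma> T \<longleftrightarrow> e \<in> T"
  by (auto simp: rename_edges_def inj_image_eq_iff)

lemma reachable_rename_edges:
  assumes "reachable T x y" "inj \<sigma>"
  shows "reachable (rename_edges \<sigma> T) (\<sigma> x) (\<sigma> y)"
  using assms(1)
proof (induction rule: rtrancl_induct)
  case (step y z)
  then have "{\<sigma> y, \<sigma> z} \<in> rename_edges \<sigma> T" "\<sigma> y \<noteq> \<sigma> z"
    using assms(2) by (auto simp: adj_def rename_edges_def inj_eq intro!: image_eqI[where x = "{y, z}"])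
  then have "(\<sigma> y, \<sigma> z) \<in> adj (rename_edges \<sigma> T)"
    by (simp add: adj_def)
  with step.IH show ?case
    by simp
qed simp

lemma spanning_tree_rename_edges:
  assumes p: "\<sigma> permutes {..<n}" and n: "n \<ge> 1" and st: "spanning_tree n T"
  shows "spanning_tree n (rename_edges \<sigma> T)"
proof -
  have T: "T \<subseteq> Kn_edges n" "connected_on n T" "card T = n - 1"
    using st spanning_tree_iff_card[OF n] by auto
  have inj: "inj \<sigma>"
    using permutes_inj[OF p] .
  have "rename_edges \<sigma> T \<subseteq> Kn_edges n"
  proof
    fix e' assume "e' \<in> rename_edges \<sigma> T"
    then obtain e where e: "e \<in> T" "e' = \<sigma> ` e"
      by (auto simp: rename_edges_def)
    then obtain a b where ab: "a < n" "b < n" "a \<noteq> b" "e = {a, b}"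
      using T(1) Kn_edgesE[of e n] by blast
    have "\<sigma> a < n" "\<sigma> b < n" "\<sigma> a \<noteq> \<sigma> b"
      using ab permutes_in_image[OF p] inj by (auto simp: inj_eq)
    then show "e' \<in> Kn_edges n"
      using e ab by (auto intro: Kn_edgesI)
  qed
  moreover have "inj_on (\<lambda>e. \<sigma> ` e) T"
    using inj by (auto simp: inj_on_def inj_image_eq_iff)
  then have "card (rename_edges \<sigma> T) = n - 1"
    using T(3) by (simp add: rename_edges_def card_image)
  moreover have "connected_on n (rename_edges \<sigma> T)"
    unfolding connected_on_def
  proof (intro allI impI)
    fix a b assume "a < n" "b < n"
    then have "reachable T (inv \<sigma> a) (inv \<sigma> b)"
      using T(2) permutes_in_image[OF permutes_inv[OF p]] by (auto simp: connected_on_def)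
    from reachable_rename_edges[OF this inj] show "reachable (rename_edges \<sigma> T) a b"
      by (simp add: permutes_inverses[OF p])
  qed
  ultimately show ?thesis
    using spanning_tree_iff_card[OF n] by auto
qed

lemma rename_edges_inv: "\<sigma> permutes {..<n} \<Longrightarrow> rename_edges (inv \<sigma>) (rename_edges \<sigma> T) = T"
  by (simp add: rename_edges_def image_image permutes_inverses)

lemma bij_betw_rename_edges:
  assumes p: "\<sigma> permutes {..<n}" and n: "n \<ge> 1"
  shows "bij_betw (rename_edges \<sigma>) (spanning_trees n) (spanning_trees n)"
proof (rule bij_betw_byWitness[where f' = "rename_edges (inv \<sigma>)"])
  have p': "inv \<sigma> permutes {..<n}"
    using permutes_inv[OF p] .
  show "\<forall>T\<in>spanning_trees n. rename_edges (inv \<sigma>) (rename_edges \<sigma> T) = T"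
    using rename_edges_inv[OF p] by simp
  show "\<forall>T\<in>spanning_trees n. rename_edges \<sigma> (rename_edges (inv \<sigma>) T) = T"
    using rename_edges_inv[OF p'] permutes_inv_inv[OF p] by simp
  show "rename_edges \<sigma> ` spanning_trees n \<subseteq> spanning_trees n"
    "rename_edges (inv \<sigma>) ` spanning_trees n \<subseteq> spanning_trees n"
    using spanning_tree_rename_edges[OF p n] spanning_tree_rename_edges[OF p' n]
    by (auto simp: spanning_trees_def)
qed

lemma permutes_obtain_map:
  assumes "distinct xs" "distinct ys" "length xs = length ys" "set xs \<subseteq> {..<n}" "set ys \<subseteq> {..<n}"
  obtains \<sigma> where "\<sigma> permutes {..<n}" "map \<sigma> xs = ys"
  using assms
proof (induction xs arbitrary: ys thesis)
  case Nil
  then show ?case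
    using permutes_id by fastforce
next
  case (Cons x xs)
  obtain y ys' where ys: "ys = y # ys'"
    using Cons.prems(4) by (cases ys) auto
  obtain \<tau> where \<tau>: "\<tau> permutes {..<n}" "map \<tau> xs = ys'"
    by (rule Cons.IH[of ys']) (use Cons.prems(2-6) ys in auto)
  define z where "z = \<tau> x"
  have "z < n" "y < n"
    using permutes_in_image[OF \<tau>(1), of x] Cons.prems(5,6) ys by (auto simp: z_def)
  have "z \<notin> set ys'"
    using Cons.prems(2) permutes_inj[OF \<tau>(1)] \<tau>(2) by (auto simp: z_def inj_eq)
  moreover have "y \<notin> set ys'"
    using Cons.prems(3) ys by simp
  ultimately have "map (Transposition.transpose z y) ys' = ys'"
    by (induction ys') (auto simp: Transposition.transpose_def)
  then have "map (Transposition.transpose z y \<circ> \<tau>) (x # xs) = ys"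
    using \<tau>(2) ys by (simp add: z_def flip: map_map)
  moreover have "Transposition.transpose z y \<circ> \<tau> permutes {..<n}"
    using permutes_compose[OF \<tau>(1) permutes_swap_id] \<open>z < n\<close> \<open>y < n\<close> by simp
  ultimately show ?case
    using Cons.prems(1) by blast
qed

section \<open>A switching bound on vertex degrees\<close>

definition nbrs :: "nat \<Rightarrow> nat set set \<Rightarrow> nat set" where
  "nbrs b T = {w. {b, w} \<in> T}"

definition deg :: "nat \<Rightarrow> nat set set \<Rightarrow> nat" where
  "deg b T = card (nbrs b T)"

text \<open>If removing the edge \<open>{b, w}\<close> leaves \<open>x\<close> in the part containing \<open>b\<close>, then replacing
  \<open>{b, w}\<close> by \<open>{w, x}\<close> yields a spanning tree in which \<open>b\<close> has lost one neighbour.\<close>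

definition switchable :: "nat \<Rightarrow> nat \<Rightarrow> nat set set \<Rightarrow> nat \<Rightarrow> nat \<Rightarrow> bool" where
  "switchable n b T w x \<longleftrightarrow> {b, w} \<in> T \<and> x < n \<and> x \<noteq> b \<and> reachable (T - {{b, w}}) x b"

definition switch :: "nat \<Rightarrow> nat set set \<Rightarrow> nat \<Rightarrow> nat \<Rightarrow> nat set set" where
  "switch b T w x = insert {w, x} (T - {{b, w}})"

lemma nbrs_subset: "T \<subseteq> Kn_edges n \<Longrightarrow> nbrs b T \<subseteq> {..<n} - {b}"
  by (auto simp: nbrs_def doubleton_eq_iff elim!: Kn_edgesE dest!: subsetD)

lemma finite_nbrs: "T \<subseteq> Kn_edges n \<Longrightarrow> finite (nbrs b T)"
  using nbrs_subset by (meson finite_Diff finite_lessThan finite_subset)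

lemma switchableD:
  assumes st: "spanning_tree n T" and sw: "switchable n b T w x"
  shows "w \<noteq> b" "x \<noteq> w" "\<not> reachable (T - {{b, w}}) w b" "{w, x} \<notin> T"
proof -
  have bw: "{b, w} \<in> T" and xb: "reachable (T - {{b, w}}) x b"
    using sw by (auto simp: switchable_def)
  show wb: "w \<noteq> b"
    using nbrs_subset[OF spanning_tree_subset[OF st]] bw by (auto simp: nbrs_def)
  show nr: "\<not> reachable (T - {{b, w}}) w b"
    using spanning_tree_edge_not_reachable[OF st bw] wb reachable_sym by blast
  show "x \<noteq> w"
    using xb nr by auto
  have "{w, x} \<notin> T - {{b, w}}"
    using reachable_edge[of w x "T - {{b, w}}"] xb nr by (meson rtrancl_trans)
  moreover have "{w, x} \<noteq> {b, w}"
    using sw wb by (auto simp: switchable_def doubleton_eq_iff)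
  ultimately show "{w, x} \<notin> T"
    by auto
qed

lemma spanning_tree_switch:
  assumes st: "spanning_tree n T" and sw: "switchable n b T w x"
  shows "spanning_tree n (switch b T w x)"
proof -
  define F where "F = T - {{b, w}}"
  have bw: "{b, w} \<in> T" and x: "x < n" "x \<noteq> b" and xb: "reachable F x b"
    using sw by (auto simp: switchable_def F_def)
  note sw' = switchableD[OF st sw]
  have n: "n \<ge> 1"
    using x by simp
  have T: "T \<subseteq> Kn_edges n" "connected_on n T" "card T = n - 1" "finite T"
    using st spanning_tree_iff_card[OF n] finite_spanning_tree by auto
  have w: "w < n" and b: "b < n"
    using T(1) bw by (auto elim!: Kn_edgesE simp: doubleton_eq_iff)
  have "switch b T w x \<subseteq> Kn_edges n"
    using T(1) w x sw'(2) by (auto simp: switch_def intro: Kn_edgesI)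
  moreover have "card (switch b T w x) = n - 1"
    using T(3,4) bw sw'(4) x b by (simp add: switch_def)
  moreover have to_b: "reachable (switch b T w x) y b" if "y < n" for y
  proof -
    have F_sub: "F \<subseteq> switch b T w x"
      by (auto simp: switch_def F_def)
    have "reachable (insert {b, w} F) y b"
      using T(2) that b bw by (auto simp: connected_on_def F_def insert_absorb)
    then have "reachable F y b \<or> reachable F y w"
      by (auto simp: reachable_insert_edge_iff)
    moreover have "reachable (switch b T w x) w b"
      using reachable_edge[of w x "switch b T w x"] reachable_mono[OF F_sub xb]
      by (auto simp: switch_def intro: rtrancl_trans)
    ultimately show ?thesis
      using reachable_mono[OF F_sub] by (meson rtrancl_trans)
  qed
  then have "connected_on n (switch b T w x)"
    unfolding connected_on_def by (meson reachable_sym rtrancl_trans)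
  ultimately show ?thesis
    using spanning_tree_iff_card[OF n] by simp
qed

lemma deg_switch:
  assumes st: "spanning_tree n T" and sw: "switchable n b T w x"
  shows "deg b (switch b T w x) + 1 = deg b T"
proof -
  have "nbrs b (switch b T w x) = nbrs b T - {w}" "w \<in> nbrs b T"
    using sw switchableD(1)[OF st sw] by (auto simp: nbrs_def switch_def switchable_def doubleton_eq_iff)
  moreover have "finite (nbrs b T)"
    using finite_nbrs spanning_tree_subset[OF st] by blast
  ultimately show ?thesis
    unfolding deg_def by (metis Suc_eq_plus1 card_Suc_Diff1)
qed

lemma switch_inj:
  assumes st1: "spanning_tree n T1" and sw1: "switchable n b T1 w1 x1"
    and st2: "spanning_tree n T2" and sw2: "switchable n b T2 w2 x2"
    and eq: "switch b T1 w1 x1 = switch b T2 w2 x2" and new: "{w1, x1} = {w2, x2}"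
  shows "T1 = T2 \<and> w1 = w2 \<and> x1 = x2"
proof -
  have F1: "T1 - {{b, w1}} = switch b T1 w1 x1 - {{w1, x1}}"
    using switchableD(4)[OF st1 sw1] by (auto simp: switch_def)
  have F2: "T2 - {{b, w2}} = switch b T2 w2 x2 - {{w2, x2}}"
    using switchableD(4)[OF st2 sw2] by (auto simp: switch_def)
  have T1: "T1 = insert {b, w1} (T1 - {{b, w1}})" and T2: "T2 = insert {b, w2} (T2 - {{b, w2}})"
    using sw1 sw2 by (auto simp: switchable_def)
  have "T1 - {{b, w1}} = T2 - {{b, w2}}"
    using F1 F2 eq new by simp
  moreover have "w1 \<noteq> x2"
    using switchableD(3)[OF st1 sw1] sw2 calculation by (auto simp: switchable_def)
  ultimately show ?thesis
    using new T1 T2 by (auto simp: doubleton_eq_iff)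
qed

text \<open>Only the neighbour of \<open>b\<close> on the path towards \<open>x\<close> fails to be switchable.\<close>

lemma not_switchable_unique:
  assumes st: "spanning_tree n T" and x: "x < n" "x \<noteq> b" and b: "b < n"
    and w1: "{b, w1} \<in> T" "\<not> switchable n b T w1 x"
    and w2: "{b, w2} \<in> T" "\<not> switchable n b T w2 x"
  shows "w1 = w2"
proof (rule ccontr)
  assume ne: "w1 \<noteq> w2"
  define F1 where "F1 = T - {{b, w1}}"
  define F2 where "F2 = T - {{b, w2}}"
  define H where "H = F1 - {{b, w2}}"
  have bad1: "\<not> reachable F1 x b" and bad2: "\<not> reachable F2 x b"
    using w1 w2 x by (auto simp: switchable_def F1_def F2_def)
  have neq: "{b, w1} \<noteq> {b, w2}"
    using ne by (auto simp: doubleton_eq_iff)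
  have "reachable T x b"
    using st x b by (auto simp: spanning_tree_def connected_on_def)
  moreover have "T = insert {b, w1} F1"
    using w1 by (auto simp: F1_def)
  ultimately have "reachable F1 x w1"
    using bad1 by (auto simp: reachable_insert_edge_iff)
  moreover have "F1 = insert {b, w2} H"
    using w2 neq by (auto simp: F1_def H_def)
  ultimately have "reachable H x w1 \<or> reachable H x b \<or> reachable H x w2"
    by (auto simp: reachable_insert_edge_iff)
  moreover have "H \<subseteq> F1" "H \<subseteq> F2"
    by (auto simp: H_def F1_def F2_def)
  moreover have "reachable F2 w1 b" "reachable F1 w2 b"
    using reachable_edge[of w1 b F2] reachable_edge[of w2 b F1] w1 w2 neq
    by (auto simp: F1_def F2_def insert_commute)
  ultimately show False
    using bad1 bad2 reachable_mono by (meson rtrancl_trans)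
qed

lemma deg_le_card_switchable:
  assumes st: "spanning_tree n T" and x: "x < n" "x \<noteq> b" and b: "b < n"
  shows "deg b T \<le> card {w. switchable n b T w x} + 1"
proof -
  define G where "G = {w. switchable n b T w x}"
  have "G \<subseteq> nbrs b T"
    by (auto simp: G_def switchable_def nbrs_def)
  moreover have "finite (nbrs b T - G)"
    using finite_nbrs[OF spanning_tree_subset[OF st]] by blast
  then have "card (nbrs b T - G) \<le> Suc 0"
    using not_switchable_unique[OF st x b] by (auto simp: card_le_Suc0_iff_eq G_def nbrs_def)
  moreover have "card (nbrs b T) \<le> card G + card (nbrs b T - G)"
    by (metis Diff_partition calculation(1) card_Un_le)
  ultimately show ?thesis
    unfolding deg_def G_def by simp
qed

definition switch_triples :: "nat \<Rightarrow> nat \<Rightarrow> (nat set set \<times> nat \<times> nat) set" where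
  "switch_triples n b =
     (SIGMA T:spanning_trees n. SIGMA x:{..<n} - {b}. {w. switchable n b T w x})"

lemma finite_switchable: "spanning_tree n T \<Longrightarrow> finite {w. switchable n b T w x}"
  by (rule finite_subset[OF _ finite_nbrs[OF spanning_tree_subset]])
     (auto simp: switchable_def nbrs_def)

lemma finite_switch_triples: "finite (switch_triples n b)"
  unfolding switch_triples_def using finite_spanning_trees finite_switchable
  by (intro finite_SigmaI) (auto simp: spanning_trees_def)

lemma sum_deg_switch_triples_lower:
  assumes b: "b < n"
  shows "(n - 1) * (\<Sum>T\<in>spanning_trees n. deg b T * (deg b T - 1))
    \<le> (\<Sum>t\<in>switch_triples n b. deg b (fst t))"
proof -
  have "(n - 1) * (deg b T - 1) \<le> card (SIGMA x:{..<n} - {b}. {w. switchable n b T w x})"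
    if T: "T \<in> spanning_trees n" for T
  proof -
    have "(\<Sum>x\<in>{..<n} - {b}. deg b T - 1) \<le> (\<Sum>x\<in>{..<n} - {b}. card {w. switchable n b T w x})"
      using deg_le_card_switchable[of n T _ b] T b
      by (intro sum_mono) (force simp: spanning_trees_def)
    then show ?thesis
      using b finite_switchable T by (simp add: card_SigmaI spanning_trees_def)
  qed
  then have "(\<Sum>T\<in>spanning_trees n. (n - 1) * (deg b T - 1) * deg b T)
      \<le> (\<Sum>T\<in>spanning_trees n. card (SIGMA x:{..<n} - {b}. {w. switchable n b T w x}) * deg b T)"
    by (intro sum_mono mult_right_mono) auto
  also have "\<dots> = (\<Sum>t\<in>switch_triples n b. deg b (fst t))"
  proof -
    have "\<forall>T\<in>spanning_trees n. finite (SIGMA x:{..<n} - {b}. {w. switchable n b T w x})"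
      using finite_switchable by (auto simp: spanning_trees_def)
    from sum.Sigma[OF finite_spanning_trees this, where g = "\<lambda>T p. deg b T"] show ?thesis
      unfolding switch_triples_def by (simp add: split_def)
  qed
  finally show ?thesis
    by (simp add: sum_distrib_left ac_simps)
qed

lemma card_switch_preimage_le:
  fixes b :: nat
  defines "sw \<equiv> \<lambda>(T, x, w). switch b T w x"
  assumes st: "spanning_tree n T'" and n: "n \<ge> 1"
  shows "card {t \<in> switch_triples n b. sw t = T'} \<le> n - 1"
proof -
  define P where "P = {t \<in> switch_triples n b. sw t = T'}"
  have "inj_on (\<lambda>(T, x, w). {w, x}) P"
  proof (rule inj_onI)
    fix t1 t2 assume t: "t1 \<in> P" "t2 \<in> P" "(\<lambda>(T, x, w). {w, x}) t1 = (\<lambda>(T, x, w). {w, x}) t2"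
    obtain T1 x1 w1 T2 x2 w2 where t12: "t1 = (T1, x1, w1)" "t2 = (T2, x2, w2)"
      by (cases t1, cases t2) auto
    with t show "t1 = t2"
      using switch_inj[of n T1 b w1 x1 T2 w2 x2]
      by (auto simp: P_def sw_def switch_triples_def spanning_trees_def)
  qed
  moreover have "(\<lambda>(T, x, w). {w, x}) ` P \<subseteq> T'"
    by (auto simp: P_def sw_def switch_def)
  ultimately have "card P \<le> card T'"
    using finite_spanning_tree[OF st] by (meson card_inj_on_le)
  then show ?thesis
    using card_spanning_tree[OF st n] by (simp add: P_def)
qed

lemma sum_deg_switch_triples_upper:
  assumes n: "n \<ge> 1"
  shows "(\<Sum>t\<in>switch_triples n b. deg b (fst t)) \<le> (n - 1) * (\<Sum>T\<in>spanning_trees n. deg b T + 1)"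
proof -
  define sw where "sw = (\<lambda>(T, x, w). switch b T w x)"
  have "sw ` switch_triples n b \<subseteq> spanning_trees n"
    using spanning_tree_switch by (auto simp: switch_triples_def sw_def spanning_trees_def)
  from sum.group[OF finite_switch_triples finite_spanning_trees this, of "\<lambda>t. deg b (fst t)"]
  have "(\<Sum>t\<in>switch_triples n b. deg b (fst t))
      = (\<Sum>T'\<in>spanning_trees n. \<Sum>t\<in>{t \<in> switch_triples n b. sw t = T'}. deg b (fst t))"
    by simp
  also have "\<dots> \<le> (\<Sum>T'\<in>spanning_trees n. (n - 1) * (deg b T' + 1))"
  proof (intro sum_mono)
    fix T' assume "T' \<in> spanning_trees n"
    define P where "P = {t \<in> switch_triples n b. sw t = T'}"
    have "card P \<le> n - 1"
      using card_switch_preimage_le[OF _ n] \<open>T' \<in> spanning_trees n\<close>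
      by (simp add: spanning_trees_def sw_def P_def)
    moreover have "deg b (fst t) = deg b T' + 1" if "t \<in> P" for t
      using that deg_switch
      by (auto simp: switch_triples_def sw_def spanning_trees_def P_def split: prod.splits)
    then have "(\<Sum>t\<in>P. deg b (fst t)) = card P * (deg b T' + 1)"
      by simp
    ultimately show "(\<Sum>t\<in>{t \<in> switch_triples n b. sw t = T'}. deg b (fst t)) \<le> (n - 1) * (deg b T' + 1)"
      unfolding P_def[symmetric] by (metis mult_le_mono1)
  qed
  finally show ?thesis
    by (simp add: sum_distrib_left)
qed

text \<open>Counting the switch triples from both ends gives \<open>(n - 1) X \<le> (n - 1) Y\<close> for
  \<open>X = \<Sum> deg (deg - 1)\<close> and \<open>Y = \<Sum> (deg + 1)\<close>, and \<open>2 Y \<le> X + 6 |S|\<close> pointwise.\<close>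

lemma sum_deg_pairs_le:
  assumes b: "b < n"
  shows "(\<Sum>T\<in>spanning_trees n. deg b T * (deg b T - 1)) \<le> 6 * card (spanning_trees n)"
proof -
  define X where "X = (\<Sum>T\<in>spanning_trees n. deg b T * (deg b T - 1))"
  define Y where "Y = (\<Sum>T\<in>spanning_trees n. deg b T + 1)"
  have quadratic: "2 * (d + 1) \<le> d * (d - 1) + 6" for d :: nat
  proof (cases "d \<le> 2")
    case True
    then show ?thesis
      by (cases d; cases "d - 1") auto
  next
    case False
    then obtain e where "d = e + 3"
      using le_Suc_ex[of 3 d] by (auto simp: add.commute)
    then show ?thesis
      by (simp add: algebra_simps)
  qed
  have "2 * Y = (\<Sum>T\<in>spanning_trees n. 2 * (deg b T + 1))"
    by (simp add: Y_def sum_distrib_left)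
  also have "\<dots> \<le> (\<Sum>T\<in>spanning_trees n. deg b T * (deg b T - 1) + 6)"
    by (intro sum_mono quadratic)
  also have "\<dots> = X + 6 * card (spanning_trees n)"
    by (simp add: X_def sum.distrib)
  finally have XY: "2 * Y \<le> X + 6 * card (spanning_trees n)" .
  have "(n - 1) * X \<le> (n - 1) * Y"
    using sum_deg_switch_triples_lower[OF b] sum_deg_switch_triples_upper[of n b] b
    unfolding X_def Y_def by linarith
  moreover have "X = 0" if "n = 1"
  proof -
    have "nbrs b T = {}" if "T \<in> spanning_trees n" for T
      using nbrs_subset[OF spanning_tree_subset, of n T b] that b \<open>n = 1\<close>
      by (auto simp: spanning_trees_def)
    then show ?thesis
      by (simp add: X_def deg_def)
  qed
  ultimately have "X \<le> 6 * card (spanning_trees n)"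
    using XY b by (cases "n = 1") auto
  then show ?thesis
    by (simp add: X_def)
qed

section \<open>Counting trees through given edges\<close>

definition trees_with :: "nat \<Rightarrow> nat set \<Rightarrow> nat set \<Rightarrow> real" where
  "trees_with n e f = (\<Sum>T\<in>spanning_trees n. of_bool (e \<in> T \<and> f \<in> T))"

lemma trees_with_nonneg: "trees_with n e f \<ge> 0"
  by (simp add: trees_with_def sum_nonneg)

lemma trees_with_permutes:
  assumes p: "\<sigma> permutes {..<n}" and n: "n \<ge> 1"
  shows "trees_with n (\<sigma> ` e) (\<sigma> ` f) = trees_with n e f"
proof -
  have "trees_with n (\<sigma> ` e) (\<sigma> ` f) =
      (\<Sum>T\<in>spanning_trees n. of_bool (\<sigma> ` e \<in> rename_edges \<sigma> T \<and> \<sigma> ` f \<in> rename_edges \<sigma> T))"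
    unfolding trees_with_def by (rule sum.reindex_bij_betw[OF bij_betw_rename_edges[OF p n], symmetric])
  also have "\<dots> = trees_with n e f"
    by (simp add: rename_edges_mem_iff[OF permutes_inj[OF p]] trees_with_def)
  finally show ?thesis .
qed

lemma trees_with_relabel:
  assumes "distinct xs" "distinct ys" "length xs = length ys" "set xs \<subseteq> {..<n}" "set ys \<subseteq> {..<n}"
    and "n \<ge> 1" and "\<And>\<sigma>. map \<sigma> xs = ys \<Longrightarrow> \<sigma> ` e = e' \<and> \<sigma> ` f = f'"
  shows "trees_with n e f = trees_with n e' f'"
proof -
  obtain \<sigma> where "\<sigma> permutes {..<n}" "map \<sigma> xs = ys"
    using permutes_obtain_map assms(1-5) by metis
  then show ?thesis
    using trees_with_permutes[of \<sigma> n e f] assms(6,7) by metis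
qed

lemma trees_with_same_edge:
  assumes "e \<in> Kn_edges n" "f \<in> Kn_edges n"
  shows "trees_with n e e = trees_with n f f"
proof -
  obtain a b c d where "a < n" "b < n" "a \<noteq> b" "e = {a, b}" "c < n" "d < n" "c \<noteq> d" "f = {c, d}"
    using assms by (auto elim!: Kn_edgesE)
  then show ?thesis
    by (intro trees_with_relabel[of "[a, b]" "[c, d]"]) auto
qed

lemma trees_with_adjacent:
  assumes "a < n" "b < n" "c < n" "distinct [a, b, c]" "n \<ge> 3"
  shows "trees_with n {a, b} {a, c} = trees_with n {0, 1} {0, 2}"
  using assms by (intro trees_with_relabel[of "[a, b, c]" "[0, 1, 2]"]) auto

lemma trees_with_disjoint:
  assumes "a < n" "b < n" "c < n" "d < n" "distinct [a, b, c, d]" "n \<ge> 4"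
  shows "trees_with n {a, b} {c, d} = trees_with n {0, 1} {2, 3}"
  using assms by (intro trees_with_relabel[of "[a, b, c, d]" "[0, 1, 2, 3]"]) auto

lemma sum_of_bool_mem_Kn_edges:
  "T \<subseteq> Kn_edges n \<Longrightarrow> (\<Sum>e\<in>Kn_edges n. (of_bool (e \<in> T) :: real)) = real (card T)"
  using sum_of_bool_eq[of "Kn_edges n" "\<lambda>e. e \<in> T"] finite_Kn_edges by (simp add: Int_absorb1)

lemma sum_trees_with_row:
  assumes "n \<ge> 1"
  shows "(\<Sum>f\<in>Kn_edges n. trees_with n e f) = real (n - 1) * trees_with n e e"
proof -
  have "(\<Sum>f\<in>Kn_edges n. trees_with n e f) =
      (\<Sum>T\<in>spanning_trees n. of_bool (e \<in> T) * (\<Sum>f\<in>Kn_edges n. of_bool (f \<in> T)))"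
    unfolding trees_with_def of_bool_conj sum_distrib_left by (rule sum.swap)
  also have "\<dots> = (\<Sum>T\<in>spanning_trees n. of_bool (e \<in> T) * real (n - 1))"
    using assms sum_of_bool_mem_Kn_edges card_spanning_tree
    by (intro sum.cong) (auto simp: spanning_trees_def spanning_tree_subset)
  finally show ?thesis
    by (simp add: trees_with_def sum_distrib_left mult.commute)
qed

lemma trees_with_edge:
  assumes n: "n \<ge> 2" and e: "e \<in> Kn_edges n"
  shows "trees_with n e e = 2 / real n * card (spanning_trees n)"
proof -
  have "(\<Sum>f\<in>Kn_edges n. trees_with n f f) =
      (\<Sum>T\<in>spanning_trees n. \<Sum>f\<in>Kn_edges n. of_bool (f \<in> T))"
    unfolding trees_with_def by (simp add: sum.swap[of _ "Kn_edges n"])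
  also have "\<dots> = real (n - 1) * card (spanning_trees n)"
    using n sum_of_bool_mem_Kn_edges card_spanning_tree
    by (simp add: spanning_trees_def spanning_tree_subset)
  finally have "real (n choose 2) * trees_with n e e = real (n - 1) * card (spanning_trees n)"
    using trees_with_same_edge[OF _ e] by (simp add: card_Kn_edges)
  then have "(real n - 1) * (real n * trees_with n e e - 2 * card (spanning_trees n)) = 0"
    using n by (simp add: real_choose_two of_nat_diff field_simps)
  moreover have "real n - 1 \<noteq> 0"
    using n by simp
  ultimately have "real n * trees_with n e e = 2 * card (spanning_trees n)"
    by simp
  then show ?thesis
    using n by (simp add: field_simps)
qed

lemma deg_pairs_eq_sum:
  assumes T: "T \<subseteq> Kn_edges n"
  shows "real (deg b T * (deg b T - 1)) =
    (\<Sum>c\<in>{..<n} - {b}. \<Sum>c'\<in>{..<n} - {b} - {c}. of_bool ({b, c} \<in> T \<and> {b, c'} \<in> T))"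
proof -
  define V where "V = {..<n} - {b}"
  define N where "N = nbrs b T"
  have NV: "N \<subseteq> V"
    using nbrs_subset[OF T] by (simp add: N_def V_def)
  have "(\<Sum>c'\<in>V - {c}. (of_bool (c' \<in> N) :: real)) = real (card N - 1)" if "c \<in> N" for c
  proof -
    have "(V - {c}) \<inter> {c'. c' \<in> N} = N - {c}"
      using NV by auto
    then show ?thesis
      using that sum_of_bool_eq[of "V - {c}" "\<lambda>c'. c' \<in> N"] by (simp add: V_def)
  qed
  then have "(\<Sum>c\<in>V. \<Sum>c'\<in>V - {c}. of_bool ({b, c} \<in> T \<and> {b, c'} \<in> T))
      = (\<Sum>c\<in>V. of_bool (c \<in> N) * real (card N - 1))"
    by (intro sum.cong) (auto simp: N_def nbrs_def of_bool_conj sum_distrib_left)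
  also have "\<dots> = real (card N) * real (card N - 1)"
    using sum_of_bool_eq[of V "\<lambda>c. c \<in> N"] NV by (simp add: V_def Int_absorb1 flip: sum_distrib_right)
  finally show ?thesis
    by (simp add: V_def N_def deg_def)
qed

lemma trees_with_adjacent_le:
  assumes n: "n \<ge> 3"
  shows "real (n - 1) * real (n - 2) * trees_with n {0, 1} {0, 2} \<le> 6 * card (spanning_trees n)"
proof -
  define V where "V = {..<n} - {0::nat}"
  have "(\<Sum>T\<in>spanning_trees n. real (deg 0 T * (deg 0 T - 1))) =
      (\<Sum>c\<in>V. \<Sum>c'\<in>V - {c}. trees_with n {0, c} {0, c'})"
    unfolding trees_with_def V_def using deg_pairs_eq_sum[OF spanning_tree_subset]
    by (simp add: spanning_trees_def sum.swap[of _ "spanning_trees n"] sum.swap[of _ "Collect (spanning_tree n)"])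
  also have "\<dots> = (\<Sum>c\<in>V. \<Sum>c'\<in>V - {c}. trees_with n {0, 1} {0, 2})"
    using n by (intro sum.cong refl trees_with_adjacent) (auto simp: V_def)
  also have "\<dots> = real (n - 1) * real (n - 2) * trees_with n {0, 1} {0, 2}"
    using n by (simp add: V_def)
  finally have eq: "(\<Sum>T\<in>spanning_trees n. real (deg 0 T * (deg 0 T - 1))) =
      real (n - 1) * real (n - 2) * trees_with n {0, 1} {0, 2}" .
  have "real (\<Sum>T\<in>spanning_trees n. deg 0 T * (deg 0 T - 1)) \<le> real (6 * card (spanning_trees n))"
    using sum_deg_pairs_le[of 0 n] n by (intro of_nat_mono) simp
  then show ?thesis
    using eq by simp
qed

definition adjacent_edges :: "nat \<Rightarrow> nat set \<Rightarrow> nat set set" where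
  "adjacent_edges n e = {f \<in> Kn_edges n. f \<noteq> e \<and> f \<inter> e \<noteq> {}}"

definition disjoint_edges :: "nat \<Rightarrow> nat set \<Rightarrow> nat set set" where
  "disjoint_edges n e = {f \<in> Kn_edges n. f \<inter> e = {}}"

lemma Kn_edges_split:
  assumes "e \<in> Kn_edges n"
  shows "Kn_edges n = insert e (adjacent_edges n e \<union> disjoint_edges n e)"
    and "adjacent_edges n e \<inter> disjoint_edges n e = {}"
    and "e \<notin> adjacent_edges n e \<union> disjoint_edges n e"
proof -
  show "Kn_edges n = insert e (adjacent_edges n e \<union> disjoint_edges n e)"
    using assms by (auto simp: adjacent_edges_def disjoint_edges_def)
  show "adjacent_edges n e \<inter> disjoint_edges n e = {}"
    by (auto simp: adjacent_edges_def disjoint_edges_def)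
  have "e \<noteq> {}"
    using assms by (auto elim: Kn_edgesE)
  then show "e \<notin> adjacent_edges n e \<union> disjoint_edges n e"
    by (auto simp: adjacent_edges_def disjoint_edges_def)
qed

lemma Kn_edges_obtain_other:
  assumes "e \<in> Kn_edges n" "u \<in> e"
  obtains v where "v < n" "v \<noteq> u" "e = {u, v}"
proof -
  obtain a b where ab: "a < n" "b < n" "a \<noteq> b" "e = {a, b}"
    using assms(1) by (rule Kn_edgesE)
  show ?thesis
  proof (cases "u = a")
    case True
    then show ?thesis
      using that[of b] ab by simp
  next
    case False
    then have "u = b"
      using assms(2) ab by auto
    then show ?thesis
      using that[of a] ab by (simp add: insert_commute)
  qed
qed

lemma card_adjacent_edges_le:
  assumes "e \<in> Kn_edges n"
  shows "card (adjacent_edges n e) \<le> 2 * n"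
proof -
  obtain a b where e: "e = {a, b}"
    using assms by (elim Kn_edgesE)
  have "adjacent_edges n e \<subseteq> (\<lambda>c. {a, c}) ` {..<n} \<union> (\<lambda>c. {b, c}) ` {..<n}"
    by (auto simp: adjacent_edges_def e insert_commute elim!: Kn_edgesE)
  then have "card (adjacent_edges n e) \<le> card ((\<lambda>c. {a, c}) ` {..<n}) + card ((\<lambda>c. {b, c}) ` {..<n})"
    by (meson card_Un_le card_mono finite_UnI finite_imageI finite_lessThan order_trans)
  also have "\<dots> \<le> 2 * n"
    using card_image_le[of "{..<n}" "\<lambda>c. {a, c}"] card_image_le[of "{..<n}" "\<lambda>c. {b, c}"] by simp
  finally show ?thesis .
qed

lemma trees_with_adjacent_edge:
  assumes n: "n \<ge> 3" and e: "e \<in> Kn_edges n" and f: "f \<in> adjacent_edges n e"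
  shows "trees_with n e f = trees_with n {0, 1} {0, 2}"
proof -
  have f': "f \<in> Kn_edges n" "f \<noteq> e" "f \<inter> e \<noteq> {}"
    using f by (auto simp: adjacent_edges_def)
  then obtain u where u: "u \<in> e" "u \<in> f"
    by blast
  obtain v where v: "v < n" "v \<noteq> u" "e = {u, v}"
    using Kn_edges_obtain_other[OF e u(1)] .
  obtain w where w: "w < n" "w \<noteq> u" "f = {u, w}"
    using Kn_edges_obtain_other[OF f'(1) u(2)] .
  have "u < n"
    using e v(3) by (auto elim!: Kn_edgesE simp: doubleton_eq_iff)
  moreover have "v \<noteq> w"
    using f'(2) v(3) w(3) by auto
  ultimately show ?thesis
    using trees_with_adjacent[of u n v w] n v w by simp
qed

lemma trees_with_disjoint_edge:
  assumes n: "n \<ge> 4" and e: "e \<in> Kn_edges n" and f: "f \<in> disjoint_edges n e"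
  shows "trees_with n e f = trees_with n {0, 1} {2, 3}"
proof -
  have f': "f \<in> Kn_edges n" "f \<inter> e = {}"
    using f by (auto simp: disjoint_edges_def)
  obtain a b where ab: "a < n" "b < n" "a \<noteq> b" "e = {a, b}"
    using e by (rule Kn_edgesE)
  obtain c d where cd: "c < n" "d < n" "c \<noteq> d" "f = {c, d}"
    using f'(1) by (rule Kn_edgesE)
  have "distinct [a, b, c, d]"
    using ab cd f'(2) by auto
  then show ?thesis
    using trees_with_disjoint[of a n b c d] ab cd n by simp
qed

lemma row_sum_sq_le:
  fixes p qA qD qa a d A B m :: real
  assumes row: "p + a * qA + d * qD = m * p"
    and qA: "0 \<le> qA" "qA \<le> qa" and qD: "0 \<le> qD" and a: "0 \<le> a" "a \<le> A"
    and B: "B \<le> d" "0 < B" and p: "0 \<le> p" and m: "1 \<le> m"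
  shows "p\<^sup>2 + a * qA\<^sup>2 + d * qD\<^sup>2 \<le> p\<^sup>2 + A * qa\<^sup>2 + ((m - 1) * p)\<^sup>2 / B"
proof -
  have "0 \<le> a * qA"
    using qA a by simp
  then have dqD: "d * qD \<le> (m - 1) * p"
    using row by (simp add: algebra_simps)
  have "B * qD \<le> d * qD"
    using B(1) qD by (rule mult_right_mono)
  then have "qD \<le> (m - 1) * p / B"
    using dqD B(2) by (simp add: pos_le_divide_eq mult.commute)
  from mult_mono[OF dqD this] have "(d * qD) * qD \<le> ((m - 1) * p) * ((m - 1) * p / B)"
    using qD m p by simp
  then have "d * qD\<^sup>2 \<le> ((m - 1) * p)\<^sup>2 / B"
    by (simp add: power2_eq_square mult.assoc)
  moreover have "a * qA\<^sup>2 \<le> A * qa\<^sup>2"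
    using qA a by (intro mult_mono power_mono) auto
  ultimately show ?thesis
    by simp
qed

text \<open>By symmetry a row \<open>f \<mapsto> trees_with n e f\<close> takes only three values: on \<open>e\<close>, on the at most
  \<open>2 n\<close> edges adjacent to \<open>e\<close> (bounded by the switching argument), and on the edges disjoint
  from \<open>e\<close> (bounded through the row sum); \<open>pair_sq_bound\<close> has one term for each kind.\<close>

definition pair_sq_bound :: "nat \<Rightarrow> real" where
  "pair_sq_bound n = (2 / real n)\<^sup>2 + 2 * real n * (6 / ((real n - 1) * (real n - 2)))\<^sup>2
     + ((real n - 2) * (2 / real n))\<^sup>2 / (real (n choose 2) - 1 - 2 * real n)"

lemma card_disjoint_edges_ge:
  assumes "e \<in> Kn_edges n"
  shows "real (n choose 2) - 1 - 2 * real n \<le> card (disjoint_edges n e)"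
proof -
  have "finite (adjacent_edges n e)" "finite (disjoint_edges n e)"
    using finite_Kn_edges by (auto simp: adjacent_edges_def disjoint_edges_def)
  then have "card (Kn_edges n) = 1 + card (adjacent_edges n e) + card (disjoint_edges n e)"
    using Kn_edges_split[OF assms] by (simp add: card_Un_disjoint)
  then show ?thesis
    using card_adjacent_edges_le[OF assms] by (simp add: card_Kn_edges)
qed

lemma sum_trees_with_row_split:
  fixes g :: "real \<Rightarrow> real"
  assumes n: "n \<ge> 4" and e: "e \<in> Kn_edges n"
  shows "(\<Sum>f\<in>Kn_edges n. g (trees_with n e f)) = g (trees_with n e e)
    + real (card (adjacent_edges n e)) * g (trees_with n {0, 1} {0, 2})
    + real (card (disjoint_edges n e)) * g (trees_with n {0, 1} {2, 3})"
proof -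
  have "finite (adjacent_edges n e)" "finite (disjoint_edges n e)"
    using finite_Kn_edges by (auto simp: adjacent_edges_def disjoint_edges_def)
  then have "(\<Sum>f\<in>Kn_edges n. g (trees_with n e f)) = g (trees_with n e e)
      + (\<Sum>f\<in>adjacent_edges n e. g (trees_with n e f)) + (\<Sum>f\<in>disjoint_edges n e. g (trees_with n e f))"
    using Kn_edges_split[OF e] by (simp add: sum.union_disjoint)
  then show ?thesis
    using trees_with_adjacent_edge[OF _ e] trees_with_disjoint_edge[OF _ e] n by simp
qed

lemma sum_sq_trees_with_row_le:
  assumes n: "n \<ge> 7" and e: "e \<in> Kn_edges n"
  shows "(\<Sum>f\<in>Kn_edges n. (trees_with n e f / card (spanning_trees n))\<^sup>2) \<le> pair_sq_bound n"
proof -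
  define cS where "cS = real (card (spanning_trees n))"
  define p where "p = 2 / real n"
  define qA where "qA = trees_with n {0, 1} {0, 2} / cS"
  define qD where "qD = trees_with n {0, 1} {2, 3} / cS"
  define a where "a = real (card (adjacent_edges n e))"
  define d where "d = real (card (disjoint_edges n e))"
  have cS: "cS > 0"
    using card_spanning_trees_pos[of n] n by (simp add: cS_def)
  have split: "(\<Sum>f\<in>Kn_edges n. g (trees_with n e f / cS)) = g p + a * g qA + d * g qD"
    for g :: "real \<Rightarrow> real"
    using sum_trees_with_row_split[OF _ e, of "\<lambda>x. g (x / cS)"] trees_with_edge[OF _ e] n cS
    by (simp add: p_def qA_def qD_def cS_def a_def d_def)
  have "p + a * qA + d * qD = (\<Sum>f\<in>Kn_edges n. trees_with n e f) / cS"
    using split[of "\<lambda>x. x"] by (simp add: sum_divide_distrib)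
  also have "\<dots> = (real n - 1) * p"
    using sum_trees_with_row[of n e] trees_with_edge[OF _ e] n cS by (simp add: p_def cS_def of_nat_diff)
  finally have row: "p + a * qA + d * qD = (real n - 1) * p" .
  have "(real n - 1) * (real n - 2) * qA * cS \<le> 6 * cS"
    using trees_with_adjacent_le[of n] n cS by (simp add: qA_def cS_def of_nat_diff)
  then have "(real n - 1) * (real n - 2) * qA \<le> 6"
    using cS by simp
  moreover have "(real n - 1) * (real n - 2) > 0"
    using n by simp
  ultimately have qA: "qA \<le> 6 / ((real n - 1) * (real n - 2))"
    by (simp add: pos_le_divide_eq mult.commute)
  have "real n * (real n - 1) / 2 \<ge> 3 * real n" "real n \<ge> 7"
    using n by (simp_all add: field_simps)
  then have B: "real (n choose 2) - 1 - 2 * real n > 0"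
    unfolding real_choose_two by linarith
  have "p\<^sup>2 + a * qA\<^sup>2 + d * qD\<^sup>2 \<le> pair_sq_bound n"
    unfolding pair_sq_bound_def
    using row_sum_sq_le[OF row _ qA _ _ _ card_disjoint_edges_ge[OF e, folded d_def] B, of "2 * real n"]
      card_adjacent_edges_le[OF e] n
    by (simp add: p_def qA_def qD_def cS_def a_def trees_with_nonneg cS)
  then show ?thesis
    using split[of "\<lambda>x. x\<^sup>2"] by (simp add: cS_def)
qed

lemma sum_sq_trees_with_le:
  assumes "n \<ge> 7"
  shows "(\<Sum>e\<in>Kn_edges n. \<Sum>f\<in>Kn_edges n. (trees_with n e f / card (spanning_trees n))\<^sup>2)
    \<le> real (n choose 2) * pair_sq_bound n"
proof -
  have "(\<Sum>e\<in>Kn_edges n. \<Sum>f\<in>Kn_edges n. (trees_with n e f / card (spanning_trees n))\<^sup>2)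
      \<le> (\<Sum>e\<in>Kn_edges n. pair_sq_bound n)"
    using sum_sq_trees_with_row_le[OF assms] by (rule sum_mono)
  then show ?thesis
    by (simp add: card_Kn_edges)
qed

section \<open>Edge multiplicities of independent uniform trees\<close>

definition tree_tuple_set :: "nat \<Rightarrow> nat \<Rightarrow> (nat \<Rightarrow> nat set set) set" where
  "tree_tuple_set k n = PiE {..<k} (\<lambda>_. spanning_trees n)"

lemma finite_tree_tuple_set: "finite (tree_tuple_set k n)"
  by (simp add: tree_tuple_set_def finite_PiE finite_spanning_trees)

lemma tree_tuple_set_nonempty: "n \<ge> 1 \<Longrightarrow> tree_tuple_set k n \<noteq> {}"
  using card_spanning_trees_pos[of n] by (auto simp: tree_tuple_set_def PiE_eq_empty_iff)

lemma sum_tree_tuple_set_resample: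
  assumes l: "l < k"
  shows "(\<Sum>Ts\<in>tree_tuple_set k n. \<Sum>T\<in>spanning_trees n. (g (Ts(l := T)) :: real))
       = real (card (spanning_trees n)) * (\<Sum>Ts\<in>tree_tuple_set k n. g Ts)"
proof -
  define S where "S = spanning_trees n"
  define swap where "swap = (\<lambda>(Ts :: nat \<Rightarrow> nat set set, T). (Ts(l := T), Ts l))"
  have bij: "bij_betw swap (tree_tuple_set k n \<times> S) (tree_tuple_set k n \<times> S)"
    using l by (intro bij_betw_byWitness[where f' = swap])
      (auto simp: swap_def tree_tuple_set_def S_def PiE_iff extensional_def)
  have "(\<Sum>Ts\<in>tree_tuple_set k n. \<Sum>T\<in>S. g (Ts(l := T))) = (\<Sum>p\<in>tree_tuple_set k n \<times> S. g (fst (swap p)))"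
    by (simp add: sum.cartesian_product swap_def split_def)
  also have "\<dots> = (\<Sum>p\<in>tree_tuple_set k n \<times> S. g (fst p))"
    using sum.reindex_bij_betw[OF bij, of "\<lambda>p. g (fst p)"] by simp
  also have "\<dots> = (\<Sum>Ts\<in>tree_tuple_set k n. \<Sum>T\<in>S. g Ts)"
    using sum.cartesian_product[of "\<lambda>Ts T. g Ts" S "tree_tuple_set k n"] by (simp add: split_def)
  finally show ?thesis
    by (simp add: S_def sum_distrib_left mult.commute)
qed

lemma prod_of_bool: "finite J \<Longrightarrow> (\<Prod>i\<in>J. (of_bool (P i) :: 'a :: comm_semiring_1)) = of_bool (\<forall>i\<in>J. P i)"
  by (induction J rule: finite_induct) auto

lemma sum_tree_tuple_set_prod:
  assumes J: "J \<subseteq> {..<k}" and n: "n \<ge> 1"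
  shows "(\<Sum>Ts\<in>tree_tuple_set k n. \<Prod>i\<in>J. (h i (Ts i) :: real))
       = card (tree_tuple_set k n) * (\<Prod>i\<in>J. (\<Sum>T\<in>spanning_trees n. h i T) / card (spanning_trees n))"
proof -
  define cS where "cS = real (card (spanning_trees n))"
  have cS: "cS > 0"
    using card_spanning_trees_pos[OF n] by (simp add: cS_def)
  show ?thesis
    using finite_subset[OF J finite_lessThan] J
  proof (induction J rule: finite_induct)
    case (insert l J)
    define G where "G Ts = (\<Prod>i\<in>J. h i (Ts i))" for Ts
    have G_upd: "G (Ts(l := T)) = G Ts" for Ts T
      unfolding G_def using insert(2) by (intro prod.cong) auto
    have "(\<Sum>Ts\<in>tree_tuple_set k n. \<Prod>i\<in>insert l J. h i (Ts i))
        = (\<Sum>Ts\<in>tree_tuple_set k n. \<Sum>T\<in>spanning_trees n. h l ((Ts(l := T)) l) * G (Ts(l := T))) / cS"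
      using sum_tree_tuple_set_resample[of l k "\<lambda>Ts. h l (Ts l) * G Ts" n] insert cS
      by (simp add: cS_def G_def)
    also have "\<dots> = (\<Sum>Ts\<in>tree_tuple_set k n. (\<Sum>T\<in>spanning_trees n. h l T) * G Ts) / cS"
      by (simp add: G_upd sum_distrib_right)
    also have "\<dots> = ((\<Sum>T\<in>spanning_trees n. h l T) / cS) * (\<Sum>Ts\<in>tree_tuple_set k n. G Ts)"
      by (simp add: sum_distrib_left[symmetric])
    finally show ?case
      using insert by (simp add: cS_def G_def)
  qed simp
qed

definition edge_mult :: "nat \<Rightarrow> nat set \<Rightarrow> (nat \<Rightarrow> nat set set) \<Rightarrow> nat" where
  "edge_mult k e Ts = card {i\<in>{..<k}. e \<in> Ts i}"

definition index_sets :: "nat \<Rightarrow> nat \<Rightarrow> nat set set" where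
  "index_sets k r = {J. J \<subseteq> {..<k} \<and> card J = r}"

definition common_edges :: "nat \<Rightarrow> nat set \<Rightarrow> (nat \<Rightarrow> nat set set) \<Rightarrow> real" where
  "common_edges n J Ts = (\<Sum>e\<in>Kn_edges n. \<Prod>i\<in>J. of_bool (e \<in> Ts i))"

definition mult_choose_sum :: "nat \<Rightarrow> nat \<Rightarrow> nat \<Rightarrow> (nat \<Rightarrow> nat set set) \<Rightarrow> real" where
  "mult_choose_sum r k n Ts = (\<Sum>e\<in>Kn_edges n. real (edge_mult k e Ts choose r))"

lemma finite_index_sets: "finite (index_sets k r)"
  by (rule finite_subset[of _ "Pow {..<k}"]) (auto simp: index_sets_def)

lemma card_index_sets: "card (index_sets k r) = k choose r"
  using n_subsets[of "{..<k}" r] by (simp add: index_sets_def)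

lemma real_edge_mult_choose:
  "real (edge_mult k e Ts choose r) = (\<Sum>J\<in>index_sets k r. \<Prod>i\<in>J. of_bool (e \<in> Ts i))"
proof -
  define I where "I = {i\<in>{..<k}. e \<in> Ts i}"
  have "(\<Sum>J\<in>index_sets k r. \<Prod>i\<in>J. (of_bool (e \<in> Ts i) :: real))
      = (\<Sum>J\<in>index_sets k r. of_bool (J \<subseteq> I))"
    by (intro sum.cong refl)
      (auto simp: index_sets_def I_def prod_of_bool finite_subset[of _ "{..<k}"])
  also have "\<dots> = real (card (index_sets k r \<inter> {J. J \<subseteq> I}))"
    using finite_index_sets by simp
  also have "index_sets k r \<inter> {J. J \<subseteq> I} = {J. J \<subseteq> I \<and> card J = r}"
    by (auto simp: index_sets_def I_def)
  also have "card {J. J \<subseteq> I \<and> card J = r} = card I choose r"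
    by (rule n_subsets) (simp add: I_def)
  finally show ?thesis
    by (simp add: edge_mult_def I_def)
qed

lemma mult_choose_sum_eq: "mult_choose_sum r k n Ts = (\<Sum>J\<in>index_sets k r. common_edges n J Ts)"
  unfolding mult_choose_sum_def common_edges_def real_edge_mult_choose by (rule sum.swap)

lemma R_edge_eq:
  assumes k: "k \<ge> 1"
  shows "R_edge k Ts e = real (edge_mult k e Ts) - of_bool (edge_mult k e Ts > 0)"
proof -
  have sum: "(\<Sum>i<k. (of_bool (e \<in> Ts i) :: real)) = real (edge_mult k e Ts)"
    by (simp add: edge_mult_def Int_def)
  have pos: "edge_mult k e Ts > 0 \<longleftrightarrow> (\<exists>i<k. e \<in> Ts i)"
    by (auto simp: edge_mult_def card_gt_0_iff)
  have "Max ((\<lambda>i. (of_bool (e \<in> Ts i) :: real)) ` {..<k}) = of_bool (\<exists>i<k. e \<in> Ts i)"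
  proof (rule Max_eqI)
    show "of_bool (\<exists>i<k. e \<in> Ts i) \<in> (\<lambda>i. (of_bool (e \<in> Ts i) :: real)) ` {..<k}"
      using k by (cases "\<exists>i<k. e \<in> Ts i") (auto intro: image_eqI[of _ _ 0])
  qed auto
  then show ?thesis
    unfolding R_edge_def sum pos by simp
qed

lemma real_choose_three: "real (m choose 3) = real m * (real m - 1) * (real m - 2) / 6"
proof (induction m)
  case (Suc m)
  have "Suc m choose 3 = (m choose 2) + (m choose 3)"
    by (simp add: numeral_3_eq_3 numeral_2_eq_2)
  then show ?case
    using Suc by (simp add: real_choose_two field_simps)
qed simp

lemma excess_bounds:
  fixes m :: nat
  defines "R \<equiv> real m - of_bool (m > 0)"
  shows "0 \<le> R" "R \<le> real (m choose 2)" "real (m choose 2) - R \<le> real (m choose 3)"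
proof -
  show "0 \<le> R"
    by (cases m) (auto simp: R_def)
  show "R \<le> real (m choose 2)"
  proof (cases "m = 0")
    case False
    then have "(real m - 1) * (real m - 2) \<ge> 0"
      by (cases "m = 1") (auto intro: mult_nonneg_nonneg)
    with False show ?thesis
      by (auto simp: R_def real_choose_two field_simps)
  qed (simp add: R_def)
  show "real (m choose 2) - R \<le> real (m choose 3)"
  proof (cases "m \<ge> 3")
    case True
    then have "(real m - 1) * (real m - 2) * (real m - 3) \<ge> 0"
      by (intro mult_nonneg_nonneg) auto
    with True show ?thesis
      by (simp add: R_def real_choose_two real_choose_three field_simps)
  next
    case False
    then have "m = 0 \<or> m = 1 \<or> m = 2"
      by auto
    then show ?thesis
      by (auto simp: R_def real_choose_two real_choose_three)
  qed
qed

lemma M_rep_bounds: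
  assumes "k \<ge> 1"
  shows "0 \<le> M_rep k n Ts" "M_rep k n Ts \<le> mult_choose_sum 2 k n Ts"
    "mult_choose_sum 2 k n Ts - M_rep k n Ts \<le> mult_choose_sum 3 k n Ts"
proof -
  note R = R_edge_eq[OF assms]
  show "0 \<le> M_rep k n Ts"
    unfolding M_rep_def R using excess_bounds(1) by (intro sum_nonneg) auto
  show "M_rep k n Ts \<le> mult_choose_sum 2 k n Ts"
    unfolding M_rep_def mult_choose_sum_def R using excess_bounds(2) by (intro sum_mono) auto
  show "mult_choose_sum 2 k n Ts - M_rep k n Ts \<le> mult_choose_sum 3 k n Ts"
    unfolding M_rep_def mult_choose_sum_def R sum_subtractf[symmetric]
    using excess_bounds(3) by (intro sum_mono) auto
qed

lemma sum_common_edges: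
  assumes n: "n \<ge> 2" and J: "J \<subseteq> {..<k}"
  shows "(\<Sum>Ts\<in>tree_tuple_set k n. common_edges n J Ts)
    = card (tree_tuple_set k n) * real (n choose 2) * (2 / real n) ^ card J"
proof -
  have "(\<Sum>Ts\<in>tree_tuple_set k n. \<Prod>i\<in>J. of_bool (e \<in> Ts i))
      = card (tree_tuple_set k n) * (2 / real n) ^ card J" if e: "e \<in> Kn_edges n" for e
  proof -
    have "(\<Sum>T\<in>spanning_trees n. (of_bool (e \<in> T) :: real)) / card (spanning_trees n) = 2 / real n"
      using trees_with_edge[OF n e] card_spanning_trees_pos[of n] n by (simp add: trees_with_def)
    then show ?thesis
      using sum_tree_tuple_set_prod[OF J, of n "\<lambda>i T. of_bool (e \<in> T)"] n by simp
  qed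
  then show ?thesis
    unfolding common_edges_def by (subst sum.swap) (simp add: card_Kn_edges)
qed

lemma sum_common_edges_sq:
  assumes n: "n \<ge> 2" and J: "J \<in> index_sets k 2"
  shows "(\<Sum>Ts\<in>tree_tuple_set k n. (common_edges n J Ts)\<^sup>2) = card (tree_tuple_set k n) *
     (\<Sum>e\<in>Kn_edges n. \<Sum>f\<in>Kn_edges n. (trees_with n e f / card (spanning_trees n))\<^sup>2)"
proof -
  have J': "J \<subseteq> {..<k}" "card J = 2"
    using J by (auto simp: index_sets_def)
  have "(\<Sum>Ts\<in>tree_tuple_set k n. (common_edges n J Ts)\<^sup>2) =
      (\<Sum>e\<in>Kn_edges n. \<Sum>f\<in>Kn_edges n. \<Sum>Ts\<in>tree_tuple_set k n.
         \<Prod>i\<in>J. (of_bool (e \<in> Ts i \<and> f \<in> Ts i) :: real))"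
    unfolding common_edges_def power2_eq_square sum_product
    by (simp add: prod.distrib[symmetric] of_bool_conj sum.swap[of _ "tree_tuple_set k n"])
  also have "\<dots> = (\<Sum>e\<in>Kn_edges n. \<Sum>f\<in>Kn_edges n.
      card (tree_tuple_set k n) * (trees_with n e f / card (spanning_trees n))\<^sup>2)"
    using sum_tree_tuple_set_prod[OF J'(1), of n "\<lambda>i T. of_bool (_ \<in> T \<and> _ \<in> T)"] J'(2) n
    by (simp add: trees_with_def power2_eq_square)
  finally show ?thesis
    by (simp add: sum_distrib_left)
qed

lemma sum_common_edges_resample_pair:
  assumes n: "n \<ge> 2" and l: "l \<noteq> l'" and T0: "Ts l' \<in> spanning_trees n"
  shows "(\<Sum>T\<in>spanning_trees n. common_edges n {l, l'} (Ts(l := T)))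
    = card (spanning_trees n) * (real (n choose 2) * (2 / real n)\<^sup>2)"
proof -
  have "(\<Sum>T\<in>spanning_trees n. common_edges n {l, l'} (Ts(l := T)))
      = (\<Sum>e\<in>Kn_edges n. trees_with n e e * of_bool (e \<in> Ts l'))"
    unfolding common_edges_def using l
    by (subst sum.swap) (simp add: trees_with_def sum_distrib_right)
  also have "\<dots> = 2 / real n * card (spanning_trees n) * (\<Sum>e\<in>Kn_edges n. of_bool (e \<in> Ts l'))"
    using trees_with_edge[OF n] by (simp add: sum_distrib_left)
  also have "(\<Sum>e\<in>Kn_edges n. (of_bool (e \<in> Ts l') :: real)) = real n - 1"
    using sum_of_bool_mem_Kn_edges[of "Ts l'" n] card_spanning_tree[of n "Ts l'"] T0 n
    by (simp add: spanning_trees_def spanning_tree_subset of_nat_diff)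
  also have "2 / real n * card (spanning_trees n) * (real n - 1)
      = card (spanning_trees n) * (real (n choose 2) * (2 / real n)\<^sup>2)"
    using n by (simp add: real_choose_two power2_eq_square field_simps)
  finally show ?thesis .
qed

text \<open>For distinct index pairs \<open>J \<noteq> J'\<close> resampling a tree \<open>l \<in> J' - J\<close> decouples the two counts,
  so they are uncorrelated even when \<open>J\<close> and \<open>J'\<close> share an index.\<close>

lemma sum_common_edges_distinct:
  assumes n: "n \<ge> 2" and J: "J \<in> index_sets k 2" and J': "J' \<in> index_sets k 2" and ne: "J \<noteq> J'"
  shows "(\<Sum>Ts\<in>tree_tuple_set k n. common_edges n J Ts * common_edges n J' Ts)
    = card (tree_tuple_set k n) * (real (n choose 2) * (2 / real n)\<^sup>2)\<^sup>2"
proof -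
  define cS where "cS = real (card (spanning_trees n))"
  define \<gamma> where "\<gamma> = real (n choose 2) * (2 / real n)\<^sup>2"
  have cS: "cS > 0"
    using card_spanning_trees_pos[of n] n by (simp add: cS_def)
  have Jk: "J \<subseteq> {..<k}" "card J = 2" and J'k: "J' \<subseteq> {..<k}" "card J' = 2"
    using J J' by (auto simp: index_sets_def)
  have "\<not> J' \<subseteq> J"
    using card_subset_eq[OF finite_subset[OF Jk(1) finite_lessThan]] Jk(2) J'k(2) ne by metis
  then obtain l where l: "l \<in> J'" "l \<notin> J"
    by blast
  then obtain l' where l': "J' = {l, l'}" "l \<noteq> l'"
    using J'k(2) by (auto simp: card_2_iff doubleton_eq_iff)
  have lk: "l < k" "l' < k"
    using l' J'k(1) by auto
  have upd_J: "common_edges n J (Ts(l := T)) = common_edges n J Ts" for Ts T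
    unfolding common_edges_def using l(2) by (intro sum.cong prod.cong) auto
  have upd_J': "(\<Sum>T\<in>spanning_trees n. common_edges n J' (Ts(l := T))) = cS * \<gamma>"
    if "Ts \<in> tree_tuple_set k n" for Ts
    using that lk sum_common_edges_resample_pair[OF n l'(2)]
    by (auto simp: l'(1) tree_tuple_set_def PiE_iff cS_def \<gamma>_def)
  have "cS * (\<Sum>Ts\<in>tree_tuple_set k n. common_edges n J Ts * common_edges n J' Ts)
      = (\<Sum>Ts\<in>tree_tuple_set k n. \<Sum>T\<in>spanning_trees n.
           common_edges n J (Ts(l := T)) * common_edges n J' (Ts(l := T)))"
    using sum_tree_tuple_set_resample[OF lk(1), of "\<lambda>Ts. common_edges n J Ts * common_edges n J' Ts" n]
    by (simp add: cS_def)
  also have "\<dots> = (\<Sum>Ts\<in>tree_tuple_set k n. common_edges n J Ts *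
           (\<Sum>T\<in>spanning_trees n. common_edges n J' (Ts(l := T))))"
    by (simp add: upd_J sum_distrib_left)
  also have "\<dots> = cS * (\<gamma> * (\<Sum>Ts\<in>tree_tuple_set k n. common_edges n J Ts))"
    using upd_J' by (simp add: sum_distrib_left mult_ac)
  finally have "(\<Sum>Ts\<in>tree_tuple_set k n. common_edges n J Ts * common_edges n J' Ts)
      = \<gamma> * (\<Sum>Ts\<in>tree_tuple_set k n. common_edges n J Ts)"
    using cS by simp
  then show ?thesis
    using sum_common_edges[OF n Jk(1)] Jk(2) by (simp add: \<gamma>_def power2_eq_square mult_ac)
qed

lemma sum_mult_choose_sum:
  assumes "n \<ge> 2"
  shows "(\<Sum>Ts\<in>tree_tuple_set k n. mult_choose_sum r k n Ts)
    = card (tree_tuple_set k n) * real (k choose r) * real (n choose 2) * (2 / real n) ^ r"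
proof -
  have "(\<Sum>Ts\<in>tree_tuple_set k n. mult_choose_sum r k n Ts)
      = (\<Sum>J\<in>index_sets k r. \<Sum>Ts\<in>tree_tuple_set k n. common_edges n J Ts)"
    unfolding mult_choose_sum_eq by (rule sum.swap)
  also have "\<dots> = (\<Sum>J\<in>index_sets k r. card (tree_tuple_set k n) * real (n choose 2) * (2 / real n) ^ r)"
    using sum_common_edges[OF assms] by (intro sum.cong) (auto simp: index_sets_def)
  finally show ?thesis
    by (simp add: card_index_sets)
qed

lemma sum_mult_choose_sum_sq:
  assumes n: "n \<ge> 2"
  defines "\<alpha> \<equiv> (\<Sum>e\<in>Kn_edges n. \<Sum>f\<in>Kn_edges n. (trees_with n e f / card (spanning_trees n))\<^sup>2)"
    and "\<gamma> \<equiv> real (n choose 2) * (2 / real n)\<^sup>2"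
  shows "(\<Sum>Ts\<in>tree_tuple_set k n. (mult_choose_sum 2 k n Ts)\<^sup>2) = card (tree_tuple_set k n) *
    (real (k choose 2) * \<alpha> + (real (k choose 2) * real (k choose 2) - real (k choose 2)) * \<gamma>\<^sup>2)"
proof -
  define P where "P = index_sets k 2"
  define c where "c = real (card (tree_tuple_set k n))"
  have inner: "(\<Sum>J'\<in>P. \<Sum>Ts\<in>tree_tuple_set k n. common_edges n J Ts * common_edges n J' Ts)
      = c * \<alpha> + (real (card P) - 1) * (c * \<gamma>\<^sup>2)" if J: "J \<in> P" for J
  proof -
    have "(\<Sum>J'\<in>P. \<Sum>Ts\<in>tree_tuple_set k n. common_edges n J Ts * common_edges n J' Ts)
        = (\<Sum>Ts\<in>tree_tuple_set k n. (common_edges n J Ts)\<^sup>2)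
          + (\<Sum>J'\<in>P - {J}. \<Sum>Ts\<in>tree_tuple_set k n. common_edges n J Ts * common_edges n J' Ts)"
      using J finite_index_sets by (simp add: sum.remove P_def power2_eq_square)
    also have "(\<Sum>Ts\<in>tree_tuple_set k n. (common_edges n J Ts)\<^sup>2) = c * \<alpha>"
      using sum_common_edges_sq[OF n] J by (simp add: P_def c_def \<alpha>_def)
    also have "(\<Sum>J'\<in>P - {J}. \<Sum>Ts\<in>tree_tuple_set k n. common_edges n J Ts * common_edges n J' Ts)
        = (\<Sum>J'\<in>P - {J}. c * \<gamma>\<^sup>2)"
    proof (rule sum.cong[OF refl])
      fix J' assume J': "J' \<in> P - {J}"
      then have "J \<noteq> J'"
        by blast
      with J J' show "(\<Sum>Ts\<in>tree_tuple_set k n. common_edges n J Ts * common_edges n J' Ts) = c * \<gamma>\<^sup>2"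
        using sum_common_edges_distinct[OF n, of J k J'] by (simp add: P_def c_def \<gamma>_def)
    qed
    moreover have "card P > 0"
      using J finite_index_sets[of k 2] by (auto simp: P_def card_gt_0_iff)
    ultimately show ?thesis
      using J finite_index_sets by (simp add: of_nat_diff)
  qed
  have "(\<Sum>Ts\<in>tree_tuple_set k n. (mult_choose_sum 2 k n Ts)\<^sup>2)
      = (\<Sum>Ts\<in>tree_tuple_set k n. \<Sum>J\<in>P. \<Sum>J'\<in>P. common_edges n J Ts * common_edges n J' Ts)"
    unfolding mult_choose_sum_eq power2_eq_square sum_product P_def by simp
  also have "\<dots> = (\<Sum>J\<in>P. \<Sum>J'\<in>P. \<Sum>Ts\<in>tree_tuple_set k n. common_edges n J Ts * common_edges n J' Ts)"
    by (simp add: sum.swap[of _ "tree_tuple_set k n"])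
  also have "\<dots> = (\<Sum>J\<in>P. c * \<alpha> + (real (card P) - 1) * (c * \<gamma>\<^sup>2))"
    using inner by simp
  finally show ?thesis
    by (simp add: P_def c_def card_index_sets algebra_simps)
qed

section \<open>Concentration of the number of repeated edges\<close>

definition mean_lower :: "nat \<Rightarrow> nat \<Rightarrow> real" where
  "mean_lower k n = real (k choose 2) * real (n choose 2) * (2 / real n)\<^sup>2
     - real (k choose 3) * real (n choose 2) * (2 / real n) ^ 3"

definition second_moment_upper :: "nat \<Rightarrow> nat \<Rightarrow> real" where
  "second_moment_upper k n = real (k choose 2) * (real (n choose 2) * pair_sq_bound n)
     + (real (k choose 2) * real (k choose 2) - real (k choose 2)) * (real (n choose 2) * (2 / real n)\<^sup>2)\<^sup>2"

lemma tree_tuples_eq: "tree_tuples k n = pmf_of_set (tree_tuple_set k n)"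
  by (simp add: tree_tuples_def tree_tuple_set_def)

lemma expectation_tree_tuples:
  assumes "n \<ge> 1"
  shows "measure_pmf.expectation (tree_tuples k n) f = (\<Sum>Ts\<in>tree_tuple_set k n. f Ts) / card (tree_tuple_set k n)"
  unfolding tree_tuples_eq
  by (rule integral_pmf_of_set[OF tree_tuple_set_nonempty[OF assms] finite_tree_tuple_set])

lemma mean_lower_le_expectation:
  assumes k: "k \<ge> 1" and n: "n \<ge> 2"
  shows "mean_lower k n \<le> measure_pmf.expectation (tree_tuples k n) (M_rep k n)"
proof -
  define c where "c = real (card (tree_tuple_set k n))"
  have c: "c > 0"
    using tree_tuple_set_nonempty[of n k] finite_tree_tuple_set[of k n] n by (simp add: c_def card_gt_0_iff)
  have "(\<Sum>Ts\<in>tree_tuple_set k n. mult_choose_sum 2 k n Ts) - (\<Sum>Ts\<in>tree_tuple_set k n. M_rep k n Ts)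
      \<le> (\<Sum>Ts\<in>tree_tuple_set k n. mult_choose_sum 3 k n Ts)"
    unfolding sum_subtractf[symmetric] using M_rep_bounds(3)[OF k] by (intro sum_mono) auto
  then have "c * mean_lower k n \<le> (\<Sum>Ts\<in>tree_tuple_set k n. M_rep k n Ts)"
    using sum_mult_choose_sum[OF n, of 2 k] sum_mult_choose_sum[OF n, of 3 k]
    by (simp add: mean_lower_def c_def algebra_simps)
  then show ?thesis
    using c n by (simp add: expectation_tree_tuples c_def field_simps)
qed

lemma second_moment_le:
  assumes k: "k \<ge> 1" and n: "n \<ge> 7"
  shows "measure_pmf.expectation (tree_tuples k n) (\<lambda>Ts. (M_rep k n Ts)\<^sup>2) \<le> second_moment_upper k n"
proof -
  define c where "c = real (card (tree_tuple_set k n))"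
  have c: "c > 0"
    using tree_tuple_set_nonempty[of n k] finite_tree_tuple_set[of k n] n by (simp add: c_def card_gt_0_iff)
  have n2: "n \<ge> 2"
    using n by simp
  have "(\<Sum>Ts\<in>tree_tuple_set k n. (M_rep k n Ts)\<^sup>2) \<le> (\<Sum>Ts\<in>tree_tuple_set k n. (mult_choose_sum 2 k n Ts)\<^sup>2)"
    using M_rep_bounds(1,2)[OF k] by (intro sum_mono power_mono) auto
  also have "\<dots> \<le> c * second_moment_upper k n"
    unfolding sum_mult_choose_sum_sq[OF n2] second_moment_upper_def c_def[symmetric]
    using sum_sq_trees_with_le[OF n] c by (intro mult_left_mono add_right_mono) auto
  finally show ?thesis
    using c n by (simp add: expectation_tree_tuples c_def field_simps)
qed

lemma deviation_prob_le:
  assumes k: "k \<ge> 1" and n: "n \<ge> 7" and s: "s > 0" and L: "mean_lower k n > 0"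
  shows "measure_pmf.prob (tree_tuples k n)
            {Ts. \<bar>M_rep k n Ts - measure_pmf.expectation (tree_tuples k n) (M_rep k n)\<bar>
                 \<ge> s * measure_pmf.expectation (tree_tuples k n) (M_rep k n)}
         \<le> second_moment_upper k n / (s\<^sup>2 * (mean_lower k n)\<^sup>2) - 1 / s\<^sup>2"
proof -
  define P where "P = tree_tuples k n"
  define E where "E = measure_pmf.expectation P (M_rep k n)"
  define X where "X = second_moment_upper k n"
  define L where "L = mean_lower k n"
  have fin: "finite (set_pmf P)"
    using tree_tuple_set_nonempty[of n k] n by (simp add: P_def tree_tuples_eq finite_tree_tuple_set)
  have LE: "L \<le> E"
    using mean_lower_le_expectation[OF k] n by (simp add: L_def E_def P_def)
  then have E: "E > 0"
    using L by (simp add: L_def)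
  have "measure_pmf.prob P {Ts. \<bar>M_rep k n Ts - E\<bar> \<ge> s * E}
      \<le> measure_pmf.variance P (M_rep k n) / (s * E)\<^sup>2"
    using measure_pmf.Chebyshev_inequality[where M = P and f = "M_rep k n" and a = "s * E"] s E
    by (simp add: E_def integrable_measure_pmf_finite[OF fin])
  also have "\<dots> = (measure_pmf.expectation P (\<lambda>Ts. (M_rep k n Ts)\<^sup>2) - E\<^sup>2) / (s * E)\<^sup>2"
    by (simp add: measure_pmf.variance_eq integrable_measure_pmf_finite[OF fin] E_def)
  also have "\<dots> \<le> (X - E\<^sup>2) / (s * E)\<^sup>2"
    using second_moment_le[OF k n] by (intro divide_right_mono) (simp_all add: P_def X_def)
  also have "\<dots> = X / (s\<^sup>2 * E\<^sup>2) - 1 / s\<^sup>2"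
    using s E by (simp add: field_simps power2_eq_square)
  also have "\<dots> \<le> X / (s\<^sup>2 * L\<^sup>2) - 1 / s\<^sup>2"
  proof -
    have "s\<^sup>2 * L\<^sup>2 \<le> s\<^sup>2 * E\<^sup>2"
      using LE L by (intro mult_left_mono power_mono) (auto simp: L_def)
    moreover have "0 \<le> measure_pmf.expectation (tree_tuples k n) (\<lambda>Ts. (M_rep k n Ts)\<^sup>2)"
      by (rule Bochner_Integration.integral_nonneg) simp
    then have "0 \<le> X"
      unfolding X_def using second_moment_le[OF k n] by linarith
    moreover have "0 < s\<^sup>2 * E\<^sup>2 * (s\<^sup>2 * L\<^sup>2)"
      using s E L by (simp add: L_def)
    ultimately have "X / (s\<^sup>2 * E\<^sup>2) \<le> X / (s\<^sup>2 * L\<^sup>2)"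
      by (rule divide_left_mono)
    then show ?thesis
      by simp
  qed
  finally show ?thesis
    by (simp add: P_def E_def X_def L_def)
qed

lemma choose_two_sq_tendsto: "(\<lambda>n. real (n choose 2) * (2 / real n)\<^sup>2) \<longlonglongrightarrow> 2"
  unfolding real_choose_two by real_asymp

lemma mean_lower_tendsto: "mean_lower k \<longlonglongrightarrow> real (k choose 2) * 2"
proof -
  have "(\<lambda>n. real (n choose 2) * (2 / real n) ^ 3) \<longlonglongrightarrow> 0"
    unfolding real_choose_two by real_asymp
  then have "(\<lambda>n. real (k choose 2) * (real (n choose 2) * (2 / real n)\<^sup>2)
      - real (k choose 3) * (real (n choose 2) * (2 / real n) ^ 3)) \<longlonglongrightarrow> real (k choose 2) * 2 - real (k choose 3) * 0"
    by (intro tendsto_intros choose_two_sq_tendsto)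
  then show ?thesis
    by (simp add: mean_lower_def[abs_def] mult.assoc)
qed

lemma second_moment_upper_tendsto:
  "second_moment_upper k \<longlonglongrightarrow>
     real (k choose 2) * 6 + (real (k choose 2) * real (k choose 2) - real (k choose 2)) * 2\<^sup>2"
proof -
  have "(\<lambda>n. real (n choose 2) * pair_sq_bound n) \<longlonglongrightarrow> 6"
    unfolding pair_sq_bound_def real_choose_two by real_asymp
  then show ?thesis
    unfolding second_moment_upper_def[abs_def] by (intro tendsto_intros choose_two_sq_tendsto)
qed

lemma deviation_bound_tendsto:
  assumes k: "k \<ge> 2" and s: "s > 0"
  shows "(\<lambda>n. second_moment_upper k n / (s\<^sup>2 * (mean_lower k n)\<^sup>2) - 1 / s\<^sup>2)
    \<longlonglongrightarrow> 1 / (s\<^sup>2 * real k * (real k - 1))"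
proof -
  define C where "C = real (k choose 2)"
  have C: "C = real k * (real k - 1) / 2" "C > 0"
    using k by (simp_all add: C_def real_choose_two)
  have "(\<lambda>n. second_moment_upper k n / (s\<^sup>2 * (mean_lower k n)\<^sup>2) - 1 / s\<^sup>2)
      \<longlonglongrightarrow> (C * 6 + (C * C - C) * 2\<^sup>2) / (s\<^sup>2 * (C * 2)\<^sup>2) - 1 / s\<^sup>2"
    using second_moment_upper_tendsto[of k] mean_lower_tendsto[of k] C(2) s
    by (intro tendsto_intros) (auto simp: C_def)
  also have "(C * 6 + (C * C - C) * 2\<^sup>2) / (s\<^sup>2 * (C * 2)\<^sup>2) - 1 / s\<^sup>2 = 1 / (s\<^sup>2 * (2 * C))"
    using C(2) s by (simp add: field_simps power2_eq_square)
  also have "\<dots> = 1 / (s\<^sup>2 * real k * (real k - 1))"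
    by (simp add: C(1) mult.assoc)
  finally show ?thesis .
qed

theorem mainTheorem12:
  fixes k :: nat and s :: real
  assumes "k \<ge> 2" and "s > 0"
  shows "limsup (\<lambda>n. ereal (measure_pmf.prob (tree_tuples k n)
            {Ts. \<bar>M_rep k n Ts - measure_pmf.expectation (tree_tuples k n) (M_rep k n)\<bar>
                 \<ge> s * measure_pmf.expectation (tree_tuples k n) (M_rep k n)}))
         \<le> ereal (1 / (s\<^sup>2 * real k * (real k - 1)))"
proof -
  define P where "P n = measure_pmf.prob (tree_tuples k n)
            {Ts. \<bar>M_rep k n Ts - measure_pmf.expectation (tree_tuples k n) (M_rep k n)\<bar>
                 \<ge> s * measure_pmf.expectation (tree_tuples k n) (M_rep k n)}" for n
  define bound where "bound n = second_moment_upper k n / (s\<^sup>2 * (mean_lower k n)\<^sup>2) - 1 / s\<^sup>2" for n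
  have "real (k choose 2) * 2 > 0"
    using assms(1) by (simp add: real_choose_two)
  then have "eventually (\<lambda>n. mean_lower k n > 0) sequentially"
    by (rule order_tendstoD(1)[OF mean_lower_tendsto])
  then have "eventually (\<lambda>n. P n \<le> bound n) sequentially"
    using eventually_ge_at_top[of 7]
    by eventually_elim (use assms in \<open>auto simp: P_def bound_def intro!: deviation_prob_le\<close>)
  then have "limsup (\<lambda>n. ereal (P n)) \<le> limsup (\<lambda>n. ereal (bound n))"
    by (intro Limsup_mono) (auto elim: eventually_mono)
  also have "limsup (\<lambda>n. ereal (bound n)) = ereal (1 / (s\<^sup>2 * real k * (real k - 1)))"
    using deviation_bound_tendsto[OF assms] unfolding bound_def
    by (intro lim_imp_Limsup) (auto intro: tendsto_ereal)
  finally show ?thesis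
    by (simp add: P_def)
qed

end
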